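(* Let $q\in\mathbb{N}$, and for $i=1,\dots,q$ let $n_i\in\mathbb{N}$, $f_i:\mathbb{R}^{n_i}\to\mathbb{R}\cup\{+\infty\}$ be proper, closed, convex, and $A_i\in\mathbb{R}^{p\times n_i}$; let $c\in\mathbb{R}^p$. Consider $$\min_{x_1,\dots,x_q}\ \sum_{i=1}^q f_i(x_i)\quad\text{subject to}\quad \sum_{i=1}^q A_ix_i=c.$$ Assume that the Lagrangian $\mathcal{L}_0(x_1,\dots,x_q,y)=\sum_{i=1}^q f_i(x_i)+y^T(\sum_{i=1}^qA_ix_i-c)$ has a saddle point (max over $y\in\mathbb{R}^p$ of min over $x_i\in\mathbb{R}^{n_i}$ equals min over $x_i$ of max over $y$, and this saddle-point problem has a solution). Let $\rho\in[0,+\infty)$ and let $\tilde M_\rho$ be the block matrix whose $(i,j)$ block for $1\le i,j\le q$ is $\rho A_i^TA_j$, whose $(i,q+1)$ block is $A_i^T$ for $1\le i\le q$, whose $(q+1,j)$ block is $-A_j$ for $1\le j\le q$, and whose $(q+1,q+1)$ block is $0_{p\times p}$. Let $\tilde L>0$ satisfy $\|\tilde M_\rho\|_2\le\tilde L$ and let $\eta\in(0,\frac{1}{2\tilde L})$. For arbitrary initial points $x_{i,0},x_{i,-1}\in\mathbb{R}^{n_i}$ ($i=1,\dots,q$) and $y_0,y_{-1}\in\mathbb{R}^p$, define for $k=0,1,2,\dots$ and each $i=1,\dots,q$: $$\hat x_{i,k}=x_{i,k}-2\eta A_i^Ty_k-2\eta\rho\sum_{j=1}^qA_i^TA_jx_{j,k}+\eta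 A_i^Ty_{k-1}+\eta\rho\sum_{j=1}^qA_i^TA_jx_{j,k-1}+\eta\rho A_i^Tc,$$ $$x_{i,k+1}=\arg\min_{u_i\in\mathbb{R}^{n_i}}\Big(\eta f_i(u_i)+\tfrac12\|u_i-\hat x_{i,k}\|_2^2\Big),$$ $$y_{k+1}=y_k+2\eta\sum_{i=1}^qA_ix_{i,k}-\eta\sum_{i=1}^qA_ix_{i,k-1}-\eta c.$$ Then for each $i$ the sequence $\{x_{i,k}\}_{k\ge-1}$ converges, and the limit $(x_1^*,\dots,x_q^* )$ is a solution of the optimization problem.
   Context: $\|\cdot\|_2$ denotes the Euclidean norm on vectors and the spectral norm (largest singular value) on matrices. *)

theory Defs
  imports "HOL-Analysis.Analysis"
begin

text \<open>Vectors of R^n are represented as functions nat => real that vanish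
  at indices >= n; a p x n matrix is a function nat => nat => real whose
  entries (r,j) with r < p, j < n are used.  Block indices i = 1..q are
  rendered 0-based as i < q.\<close>

definition Vsp :: "nat \<Rightarrow> (nat \<Rightarrow> real) set" where
  "Vsp n = {x. \<forall>j\<ge>n. x j = 0}"

definition inner_n :: "nat \<Rightarrow> (nat \<Rightarrow> real) \<Rightarrow> (nat \<Rightarrow> real) \<Rightarrow> real" where
  "inner_n n u v = (\<Sum>j<n. u j * v j)"

definition norm2 :: "nat \<Rightarrow> (nat \<Rightarrow> real) \<Rightarrow> real" where
  "norm2 n u = sqrt (\<Sum>j<n. (u j)\<^sup>2)"

definition Av :: "(nat \<Rightarrow> nat \<Rightarrow> real) \<Rightarrow> nat \<Rightarrow> nat \<Rightarrow> (nat \<Rightarrow> real) \<Rightarrow> (nat \<Rightarrow> real)" where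
  "Av A p n x = (\<lambda>r. if r < p then (\<Sum>j<n. A r j * x j) else 0)"

definition ATv :: "(nat \<Rightarrow> nat \<Rightarrow> real) \<Rightarrow> nat \<Rightarrow> nat \<Rightarrow> (nat \<Rightarrow> real) \<Rightarrow> (nat \<Rightarrow> real)" where
  "ATv A p n y = (\<lambda>j. if j < n then (\<Sum>r<p. A r j * y r) else 0)"

definition spec_norm :: "nat \<Rightarrow> (nat \<Rightarrow> nat \<Rightarrow> real) \<Rightarrow> real" where
  "spec_norm m M = Sup ((\<lambda>z. norm2 m (Av M m m z)) ` {z \<in> Vsp m. norm2 m z \<le> 1})"

definition off :: "(nat \<Rightarrow> nat) \<Rightarrow> nat \<Rightarrow> nat" where
  "off n i = (\<Sum>j<i. n j)"

definition Mtilde :: "nat \<Rightarrow> (nat \<Rightarrow> nat) \<Rightarrow> nat \<Rightarrow> (nat \<Rightarrow> nat \<Rightarrow> nat \<Rightarrow> real) \<Rightarrow> real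
    \<Rightarrow> nat \<Rightarrow> nat \<Rightarrow> real" where
  "Mtilde q n p A \<rho> r s =
     (let N = off n q in
      (\<Sum>i<q. \<Sum>j<q. if off n i \<le> r \<and> r < off n (Suc i) \<and> off n j \<le> s \<and> s < off n (Suc j)
          then \<rho> * (\<Sum>l<p. A i l (r - off n i) * A j l (s - off n j)) else 0)
      + (\<Sum>i<q. if off n i \<le> r \<and> r < off n (Suc i) \<and> N \<le> s \<and> s < N + p
          then A i (s - N) (r - off n i) else 0)
      + (\<Sum>j<q. if N \<le> r \<and> r < N + p \<and> off n j \<le> s \<and> s < off n (Suc j)
          then - A j (r - N) (s - off n j) else 0))"

definition proper_fn :: "nat \<Rightarrow> ((nat \<Rightarrow> real) \<Rightarrow> ereal) \<Rightarrow> bool" where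
  "proper_fn n f \<longleftrightarrow> (\<forall>x\<in>Vsp n. f x \<noteq> -\<infinity>) \<and> (\<exists>x\<in>Vsp n. f x \<noteq> \<infinity>)"

definition closed_fn :: "nat \<Rightarrow> ((nat \<Rightarrow> real) \<Rightarrow> ereal) \<Rightarrow> bool" where
  "closed_fn n f \<longleftrightarrow> (\<forall>u r x t. (\<forall>k. u k \<in> Vsp n \<and> f (u k) \<le> ereal (r k)) \<and> x \<in> Vsp n
      \<and> (\<lambda>k. norm2 n (\<lambda>j. u k j - x j)) \<longlonglongrightarrow> 0 \<and> r \<longlonglongrightarrow> t \<longrightarrow> f x \<le> ereal t)"

definition convex_fn :: "nat \<Rightarrow> ((nat \<Rightarrow> real) \<Rightarrow> ereal) \<Rightarrow> bool" where
  "convex_fn n f \<longleftrightarrow> (\<forall>x\<in>Vsp n. \<forall>y\<in>Vsp n. \<forall>a b t. f x \<le> ereal a \<and> f y \<le> ereal b \<and> 0 \<le> t \<and> t \<le> 1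
      \<longrightarrow> f (\<lambda>j. t * x j + (1 - t) * y j) \<le> ereal (t * a + (1 - t) * b))"

definition sumAx :: "nat \<Rightarrow> (nat \<Rightarrow> nat) \<Rightarrow> nat \<Rightarrow> (nat \<Rightarrow> nat \<Rightarrow> nat \<Rightarrow> real)
    \<Rightarrow> (nat \<Rightarrow> nat \<Rightarrow> real) \<Rightarrow> (nat \<Rightarrow> real)" where
  "sumAx q n p A x = (\<lambda>r. \<Sum>i<q. Av (A i) p (n i) (x i) r)"

definition Lag0 :: "nat \<Rightarrow> (nat \<Rightarrow> nat) \<Rightarrow> nat \<Rightarrow> (nat \<Rightarrow> (nat \<Rightarrow> real) \<Rightarrow> ereal)
    \<Rightarrow> (nat \<Rightarrow> nat \<Rightarrow> nat \<Rightarrow> real) \<Rightarrow> (nat \<Rightarrow> real) \<Rightarrow> (nat \<Rightarrow> nat \<Rightarrow> real) \<Rightarrow> (nat \<Rightarrow> real) \<Rightarrow> ereal" where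
  "Lag0 q n p f A c x y = (\<Sum>i<q. f i (x i))
      + ereal (inner_n p y (\<lambda>r. sumAx q n p A x r - c r))"

definition has_saddle_point where
  "has_saddle_point q n p f A c \<longleftrightarrow>
     (\<exists>xs ys. (\<forall>i<q. xs i \<in> Vsp (n i)) \<and> ys \<in> Vsp p \<and>
        (\<forall>x y. (\<forall>i<q. x i \<in> Vsp (n i)) \<and> y \<in> Vsp p \<longrightarrow>
           Lag0 q n p f A c xs y \<le> Lag0 q n p f A c xs ys \<and>
           Lag0 q n p f A c xs ys \<le> Lag0 q n p f A c x ys))"

definition is_solution where
  "is_solution q n p f A c xs \<longleftrightarrow>
     (\<forall>i<q. xs i \<in> Vsp (n i)) \<and> (\<forall>r<p. sumAx q n p A xs r = c r) \<and>
     (\<forall>x. (\<forall>i<q. x i \<in> Vsp (n i)) \<and> (\<forall>r<p. sumAx q n p A x r = c r)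
        \<longrightarrow> (\<Sum>i<q. f i (xs i)) \<le> (\<Sum>i<q. f i (x i)))"

end

theory Submission
  imports Defs
begin

text \<open>Stacking \<open>z = (x\<^sub>1, \<dots>, x\<^sub>q, y)\<close>, the iteration is the forward-reflected-backward splitting
  \<open>z\<^sub>k\<^sub>+\<^sub>1 = J (z\<^sub>k - \<eta> (2 F z\<^sub>k - F z\<^sub>k\<^sub>-\<^sub>1))\<close> for the affine operator \<open>F z = M\<^sub>\<rho> z + b\<close>, where \<open>J\<close> is
  the proximal map of the \<open>f\<^sub>i\<close> on the \<open>x\<close>-blocks and the identity on the \<open>y\<close>-block. \<open>F\<close> is
  \<open>L\<close>-Lipschitz because \<open>\<parallel>M\<^sub>\<rho>\<parallel> \<le> L\<close>, and monotone since
  \<open>\<langle>F u - F v, u - v\<rangle> = \<rho> \<parallel>\<Sum> A\<^sub>i (u\<^sub>i - v\<^sub>i)\<parallel>\<^sup>2\<close>.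
  For a KKT point \<open>s\<close>, which the saddle point provides, the Lyapunov function
  \<open>\<parallel>z\<^sub>k - s\<parallel>\<^sup>2 - 2\<eta> \<langle>F z\<^sub>k - F z\<^sub>k\<^sub>-\<^sub>1, z\<^sub>k - s\<rangle> + \<eta>L \<parallel>z\<^sub>k - z\<^sub>k\<^sub>-\<^sub>1\<parallel>\<^sup>2\<close> decreases by at least
  \<open>(1 - 2\<eta>L) \<parallel>z\<^sub>k\<^sub>+\<^sub>1 - z\<^sub>k\<parallel>\<^sup>2\<close> and dominates \<open>(1 - \<eta>L) \<parallel>z\<^sub>k - s\<parallel>\<^sup>2\<close>. Hence the iterates are
  bounded with vanishing steps; by closedness of the \<open>f\<^sub>i\<close> every cluster point is again a KKT
  point, and the Lyapunov function centred at it tends to \<open>0\<close>, so the whole sequence converges.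
  Finally, the primal part of a KKT point solves the constrained problem.\<close>

lemma sum_lessThan_add:
  fixes h :: "nat \<Rightarrow> 'a::comm_monoid_add"
  shows "(\<Sum>r<a + b. h r) = (\<Sum>r<a. h r) + (\<Sum>l<b. h (a + l))"
  by (induction b) (simp_all add: add.assoc)

lemma sum_if_eq_update:
  fixes a :: "nat \<Rightarrow> real"
  assumes "i < q"
  shows "(\<Sum>j<q. if j = i then b else a j) = (\<Sum>j<q. a j) + (b - a i)"
proof -
  have "(\<Sum>j<q. if j = i then b else a j) = (\<Sum>j<q. a j + (if j = i then b - a i else 0))"
    by (intro sum.cong) auto
  then show ?thesis using assms by (simp add: sum.distrib)
qed

lemma tendsto_0_squeeze:
  fixes g h :: "nat \<Rightarrow> real"
  assumes "\<And>k. 0 \<le> g k" "\<And>k. g k \<le> h k" "h \<longlonglongrightarrow> 0"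
  shows "g \<longlonglongrightarrow> 0"
  by (rule tendsto_sandwich[where f = "\<lambda>_. 0" and h = h]) (use assms in auto)

lemma tendsto_0_if_power2_tendsto_0:
  fixes g :: "nat \<Rightarrow> real"
  assumes "(\<lambda>k. (g k)\<^sup>2) \<longlonglongrightarrow> 0"
  shows "g \<longlonglongrightarrow> 0"
proof (rule Lim_null_comparison[of _ "\<lambda>k. sqrt ((g k)\<^sup>2)"])
  show "\<forall>\<^sub>F k in sequentially. norm (g k) \<le> sqrt ((g k)\<^sup>2)" by simp
  show "(\<lambda>k. sqrt ((g k)\<^sup>2)) \<longlonglongrightarrow> 0" using tendsto_real_sqrt[OF assms] by simp
qed

lemma finite_coords_convergent_subseq:
  fixes X :: "nat \<Rightarrow> 'a \<Rightarrow> real"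
  assumes "finite I" "\<forall>j\<in>I. bounded (range (\<lambda>k. X k j))"
  shows "\<exists>r L. strict_mono r \<and> (\<forall>j\<in>I. (\<lambda>k. X (r k) j) \<longlonglongrightarrow> L j)"
  using assms
proof (induction I rule: finite_induct)
  case empty
  show ?case by (rule exI[of _ id]) (auto simp: strict_mono_def)
next
  case (insert j I)
  then obtain r L where r: "strict_mono r" and L: "\<forall>j'\<in>I. (\<lambda>k. X (r k) j') \<longlonglongrightarrow> L j'"
    by auto
  have "bounded (range (\<lambda>k. X k j))" using insert.prems by auto
  then have "bounded (range (\<lambda>k. X (r k) j))" by (rule bounded_subset) auto
  then obtain l r2 where r2: "strict_mono r2" and l: "((\<lambda>k. X (r k) j) \<circ> r2) \<longlonglongrightarrow> l"
    using bounded_imp_convergent_subsequence by blast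
  have "(\<lambda>k. X ((r \<circ> r2) k) j') \<longlonglongrightarrow> (L(j := l)) j'" if "j' \<in> insert j I" for j'
  proof (cases "j' = j")
    case True
    then show ?thesis using l by (simp add: comp_def)
  next
    case False
    then have "((\<lambda>k. X (r k) j') \<circ> r2) \<longlonglongrightarrow> L j'"
      using L r2 that by (intro LIMSEQ_subseq_LIMSEQ) auto
    then show ?thesis using False by (simp add: comp_def)
  qed
  moreover have "strict_mono (r \<circ> r2)" using r r2 by (rule strict_mono_o)
  ultimately show ?case by blast
qed

lemma norm2_nonneg: "0 \<le> norm2 m z"
  unfolding norm2_def by (intro real_sqrt_ge_zero sum_nonneg) simp

lemma norm2_power2: "(norm2 m z)\<^sup>2 = (\<Sum>j<m. (z j)\<^sup>2)"
  unfolding norm2_def by (rule real_sqrt_pow2) (intro sum_nonneg, simp)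

lemma abs_le_norm2: "j < m \<Longrightarrow> \<bar>z j\<bar> \<le> norm2 m z"
proof -
  assume "j < m"
  then have "(z j)\<^sup>2 \<le> (\<Sum>j<m. (z j)\<^sup>2)" by (intro member_le_sum) auto
  then have "sqrt ((z j)\<^sup>2) \<le> norm2 m z" unfolding norm2_def by (rule real_sqrt_le_mono)
  then show ?thesis by simp
qed

lemma norm2_mult: "norm2 m (\<lambda>j. t * z j) = \<bar>t\<bar> * norm2 m z"
proof -
  have "(\<Sum>j<m. (t * z j)\<^sup>2) = t\<^sup>2 * (\<Sum>j<m. (z j)\<^sup>2)"
    by (simp add: power_mult_distrib sum_distrib_left)
  then show ?thesis by (simp add: norm2_def real_sqrt_mult)
qed

lemma Av_mult: "Av M p m (\<lambda>j. t * z j) = (\<lambda>r. t * Av M p m z r)"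
  by (auto simp: Av_def sum_distrib_left mult.left_commute)

lemma bdd_above_spec_norm_image:
  "bdd_above ((\<lambda>z. norm2 m (Av M m m z)) ` {z \<in> Vsp m. norm2 m z \<le> 1})"
proof -
  define B where "B = sqrt (\<Sum>r<m. (\<Sum>j<m. \<bar>M r j\<bar>)\<^sup>2)"
  have "norm2 m (Av M m m z) \<le> B" if z: "norm2 m z \<le> 1" for z
  proof -
    have "(Av M m m z r)\<^sup>2 \<le> (\<Sum>j<m. \<bar>M r j\<bar>)\<^sup>2" if r: "r < m" for r
    proof -
      have "\<bar>Av M m m z r\<bar> \<le> (\<Sum>j<m. \<bar>M r j * z j\<bar>)"
        using r by (simp add: Av_def sum_abs)
      also have "\<dots> \<le> (\<Sum>j<m. \<bar>M r j\<bar>)"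
      proof (intro sum_mono)
        fix j assume "j \<in> {..<m}"
        then have "\<bar>z j\<bar> \<le> 1" using abs_le_norm2[of j m z] z by auto
        then show "\<bar>M r j * z j\<bar> \<le> \<bar>M r j\<bar>" by (simp add: abs_mult mult_left_le)
      qed
      finally have "\<bar>Av M m m z r\<bar> \<le> \<bar>\<Sum>j<m. \<bar>M r j\<bar>\<bar>" by simp
      then show ?thesis by (simp only: abs_le_square_iff)
    qed
    then have "(\<Sum>r<m. (Av M m m z r)\<^sup>2) \<le> (\<Sum>r<m. (\<Sum>j<m. \<bar>M r j\<bar>)\<^sup>2)"
      by (intro sum_mono) auto
    then show ?thesis unfolding norm2_def B_def by (rule real_sqrt_le_mono)
  qed
  then show ?thesis by (auto intro!: bdd_aboveI[of _ B])
qed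

lemma norm2_Av_le_spec_norm:
  assumes z: "z \<in> Vsp m"
  shows "norm2 m (Av M m m z) \<le> spec_norm m M * norm2 m z"
proof (cases "norm2 m z = 0")
  case True
  then have "z j = 0" if "j < m" for j using abs_le_norm2[OF that, of z] by simp
  then have "Av M m m z = (\<lambda>_. 0)" by (auto simp: Av_def)
  then show ?thesis using True by (simp add: norm2_def)
next
  case False
  define t where "t = norm2 m z"
  have t: "0 < t" using False norm2_nonneg[of m z] by (simp add: t_def)
  define w where "w = (\<lambda>j. (1 / t) * z j)"
  have "norm2 m w = 1" unfolding w_def norm2_mult using t by (simp add: t_def)
  then have w: "w \<in> {z \<in> Vsp m. norm2 m z \<le> 1}" using z by (auto simp: w_def Vsp_def)
  have "norm2 m (Av M m m w) \<le> spec_norm m M" unfolding spec_norm_def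
    by (rule cSup_upper[OF imageI[OF w] bdd_above_spec_norm_image])
  moreover have "norm2 m (Av M m m w) = (1 / t) * norm2 m (Av M m m z)"
    unfolding w_def Av_mult norm2_mult using t by simp
  ultimately show ?thesis using t by (simp add: t_def field_simps)
qed

subsection \<open>Block structure of \<open>Mtilde\<close>\<close>

lemma off_Suc: "off n (Suc i) = off n i + n i"
  by (simp add: off_def)

lemma off_mono: "i \<le> j \<Longrightarrow> off n i \<le> off n j"
  by (induction j) (auto simp: off_Suc le_Suc_eq)

lemma sum_lessThan_off:
  fixes h :: "nat \<Rightarrow> 'a::comm_monoid_add"
  shows "(\<Sum>r<off n q. h r) = (\<Sum>i<q. \<Sum>l<n i. h (off n i + l))"
  by (induction q) (simp_all add: off_Suc sum_lessThan_add off_def)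

lemma sum_lessThan_off_add:
  fixes h :: "nat \<Rightarrow> 'a::comm_monoid_add"
  shows "(\<Sum>r<off n q + p. h r) = (\<Sum>i<q. \<Sum>l<n i. h (off n i + l)) + (\<Sum>m<p. h (off n q + m))"
  by (simp add: sum_lessThan_add sum_lessThan_off)

lemma off_le_block_iff: "l < n i \<Longrightarrow> (off n i' \<le> off n i + l) = (i' \<le> i)"
  using off_mono[of i' i n] off_mono[of "Suc i" i' n] by (cases "i' \<le> i") (auto simp: off_Suc)

lemma block_less_off_Suc_iff: "l < n i \<Longrightarrow> (off n i + l < off n (Suc i')) = (i \<le> i')"
  using off_mono[of "Suc i" "Suc i'" n] off_mono[of "Suc i'" i n]
  by (cases "i \<le> i'") (auto simp: off_Suc)

lemma block_less_off_add: "i < q \<Longrightarrow> l < n i \<Longrightarrow> off n i + l < off n q + m"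
  using off_mono[of "Suc i" q n] by (simp add: off_Suc)

lemma not_off_le_block: "i < q \<Longrightarrow> l < n i \<Longrightarrow> \<not> off n q \<le> off n i + l"
  using off_mono[of "Suc i" q n] by (simp add: off_Suc)

lemma not_off_add_less_off_Suc: "i' < q \<Longrightarrow> \<not> off n q + m < off n (Suc i')"
  using off_mono[of "Suc i'" q n] by simp

lemma if_conj_0: "(if P \<and> Q then x else 0) = (if Q then (if P then x else 0) else 0)"
  by simp

lemma nat_le_antisym_conj: "((a::nat) \<le> b \<and> b \<le> a \<and> P) = (a = b \<and> P)" "((a::nat) \<le> b \<and> b \<le> a) = (a = b)"
  by auto

lemmas block_index_simps = off_le_block_iff block_less_off_Suc_iff block_less_off_add
  not_off_le_block not_off_add_less_off_Suc nat_le_antisym_conj if_conj_0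

lemma Mtilde_xx: "i < q \<Longrightarrow> l < n i \<Longrightarrow> j < q \<Longrightarrow> l' < n j \<Longrightarrow>
    Mtilde q n p A \<rho> (off n i + l) (off n j + l') = \<rho> * (\<Sum>t<p. A i t l * A j t l')"
  by (simp add: Mtilde_def Let_def block_index_simps cong: sum.cong_simp)

lemma Mtilde_xy: "i < q \<Longrightarrow> l < n i \<Longrightarrow> m < p \<Longrightarrow>
    Mtilde q n p A \<rho> (off n i + l) (off n q + m) = A i m l"
  by (simp add: Mtilde_def Let_def block_index_simps cong: sum.cong_simp)

lemma Mtilde_yx: "j < q \<Longrightarrow> l' < n j \<Longrightarrow> m < p \<Longrightarrow>
    Mtilde q n p A \<rho> (off n q + m) (off n j + l') = - A j m l'"
  by (simp add: Mtilde_def Let_def block_index_simps cong: sum.cong_simp)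

lemma Mtilde_yy: "m < p \<Longrightarrow> m' < p \<Longrightarrow> Mtilde q n p A \<rho> (off n q + m) (off n q + m') = 0"
  by (simp add: Mtilde_def Let_def block_index_simps cong: sum.cong_simp)

text \<open>A vector of the product space is given blockwise as \<open>D :: nat \<Rightarrow> nat \<Rightarrow> real\<close>: \<open>D i\<close> for
  \<open>i < q\<close> is the block \<open>x\<^sub>i\<close>, and \<open>D q\<close> is the block \<open>y\<close>.\<close>

definition stack :: "nat \<Rightarrow> (nat \<Rightarrow> nat) \<Rightarrow> nat \<Rightarrow> (nat \<Rightarrow> nat \<Rightarrow> real) \<Rightarrow> nat \<Rightarrow> real" where
  "stack q n p D r = (\<Sum>i<q. if off n i \<le> r \<and> r < off n (Suc i) then D i (r - off n i) else 0)
     + (if off n q \<le> r \<and> r < off n q + p then D q (r - off n q) else 0)"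

definition Mtilde_row :: "nat \<Rightarrow> (nat \<Rightarrow> nat) \<Rightarrow> nat \<Rightarrow> (nat \<Rightarrow> nat \<Rightarrow> nat \<Rightarrow> real) \<Rightarrow> real
    \<Rightarrow> (nat \<Rightarrow> nat \<Rightarrow> real) \<Rightarrow> nat \<Rightarrow> nat \<Rightarrow> real" where
  "Mtilde_row q n p A \<rho> D i = (\<lambda>l. \<rho> * (\<Sum>j<q. ATv (A i) p (n i) (Av (A j) p (n j) (D j)) l)
      + ATv (A i) p (n i) (D q) l)"

lemma stack_block: "i < q \<Longrightarrow> l < n i \<Longrightarrow> stack q n p D (off n i + l) = D i l"
  by (simp add: stack_def block_index_simps)

lemma stack_last: "m < p \<Longrightarrow> stack q n p D (off n q + m) = D q m"
  by (simp add: stack_def not_off_add_less_off_Suc cong: sum.cong_simp)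

lemma stack_Vsp: "stack q n p D \<in> Vsp (off n q + p)"
  unfolding Vsp_def
proof (intro CollectI allI impI)
  fix r assume r: "off n q + p \<le> r"
  have "\<not> r < off n (Suc i)" if "i < q" for i using off_mono[of "Suc i" q n] that r by auto
  then show "stack q n p D r = 0" using r unfolding stack_def by (auto intro!: sum.neutral)
qed

lemma Av_Mtilde_stack_block:
  assumes "i < q" "l < n i"
  shows "Av (Mtilde q n p A \<rho>) (off n q + p) (off n q + p) (stack q n p D) (off n i + l)
    = Mtilde_row q n p A \<rho> D i l"
proof -
  have "off n i + l < off n q + p" using block_less_off_add assms by blast
  then have "Av (Mtilde q n p A \<rho>) (off n q + p) (off n q + p) (stack q n p D) (off n i + l)
     = (\<Sum>j<q. \<Sum>l'<n j. \<rho> * (\<Sum>t<p. A i t l * A j t l') * D j l') + (\<Sum>m<p. A i m l * D q m)"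
    unfolding Av_def using assms
    by (simp add: sum_lessThan_off_add Mtilde_xx Mtilde_xy stack_block stack_last cong: sum.cong_simp)
  also have "\<dots> = Mtilde_row q n p A \<rho> D i l"
    unfolding Mtilde_row_def ATv_def Av_def using assms
    by (simp add: sum_distrib_left sum_distrib_right mult_ac sum.swap[of _ "{..<p}"] cong: sum.cong_simp)
  finally show ?thesis .
qed

lemma Av_Mtilde_stack_last:
  assumes "m < p"
  shows "Av (Mtilde q n p A \<rho>) (off n q + p) (off n q + p) (stack q n p D) (off n q + m)
    = - sumAx q n p A D m"
proof -
  have "Av (Mtilde q n p A \<rho>) (off n q + p) (off n q + p) (stack q n p D) (off n q + m)
     = (\<Sum>j<q. \<Sum>l'<n j. - A j m l' * D j l')"
    unfolding Av_def using assms
    by (simp add: sum_lessThan_off_add Mtilde_yx Mtilde_yy stack_block stack_last cong: sum.cong_simp)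
  also have "\<dots> = - sumAx q n p A D m"
    unfolding sumAx_def Av_def using assms by (simp add: sum_negf)
  finally show ?thesis .
qed

lemma Mtilde_blocks_lipschitz:
  assumes L: "spec_norm (off n q + p) (Mtilde q n p A \<rho>) \<le> L"
  shows "(\<Sum>i<q. \<Sum>l<n i. (Mtilde_row q n p A \<rho> D i l)\<^sup>2) + (\<Sum>m<p. (sumAx q n p A D m)\<^sup>2)
     \<le> L\<^sup>2 * ((\<Sum>i<q. \<Sum>l<n i. (D i l)\<^sup>2) + (\<Sum>m<p. (D q m)\<^sup>2))"
proof -
  let ?N = "off n q + p" and ?M = "Mtilde q n p A \<rho>" and ?z = "stack q n p D"
  have "norm2 ?N (Av ?M ?N ?N ?z) \<le> spec_norm ?N ?M * norm2 ?N ?z"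
    by (rule norm2_Av_le_spec_norm[OF stack_Vsp])
  also have "\<dots> \<le> L * norm2 ?N ?z" by (rule mult_right_mono[OF L norm2_nonneg])
  finally have "(norm2 ?N (Av ?M ?N ?N ?z))\<^sup>2 \<le> (L * norm2 ?N ?z)\<^sup>2"
    by (intro power_mono norm2_nonneg)
  then show ?thesis
    unfolding power_mult_distrib norm2_power2 sum_lessThan_off_add
    by (simp add: Av_Mtilde_stack_block Av_Mtilde_stack_last stack_block stack_last
        cong: sum.cong_simp)
qed

lemma sum_ATv_mult: "(\<Sum>l<m. ATv B p m v l * w l) = (\<Sum>t<p. v t * Av B p m w t)"
  unfolding ATv_def Av_def
  by (simp add: sum_distrib_left sum_distrib_right mult_ac sum.swap[of _ "{..<p}"] cong: sum.cong_simp)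

lemma Av_diff: "Av B p m (\<lambda>l. u l - v l) t = Av B p m u t - Av B p m v t"
  unfolding Av_def by (simp add: sum_subtractf right_diff_distrib)

lemma ATv_diff: "ATv B p m (\<lambda>l. u l - v l) = (\<lambda>t. ATv B p m u t - ATv B p m v t)"
  unfolding ATv_def by (auto simp: sum_subtractf right_diff_distrib)

lemma ATv_cong: "(\<And>t. t < p \<Longrightarrow> u t = v t) \<Longrightarrow> ATv B p m u = ATv B p m v"
  unfolding ATv_def by (intro ext) auto

lemma sumAx_diff: "sumAx q n p A (\<lambda>i l. U i l - V i l) t = sumAx q n p A U t - sumAx q n p A V t"
  unfolding sumAx_def by (simp add: Av_diff sum_subtractf)

lemma sumAx_cong: "(\<And>i. i < q \<Longrightarrow> U i = V i) \<Longrightarrow> sumAx q n p A U = sumAx q n p A V"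
  unfolding sumAx_def by (intro ext sum.cong) auto

lemma sumAx_beyond: "p \<le> t \<Longrightarrow> sumAx q n p A U t = 0"
  unfolding sumAx_def Av_def by simp

lemma Mtilde_row_diff:
  "Mtilde_row q n p A \<rho> (\<lambda>i l. U i l - V i l) i l = Mtilde_row q n p A \<rho> U i l - Mtilde_row q n p A \<rho> V i l"
proof -
  have "Av (A j) p (n j) (\<lambda>l. U j l - V j l) = (\<lambda>t. Av (A j) p (n j) (U j) t - Av (A j) p (n j) (V j) t)" for j
    using Av_diff by blast
  then show ?thesis unfolding Mtilde_row_def by (simp add: ATv_diff sum_subtractf algebra_simps)
qed

lemma sum_inner_ATv:
  "(\<Sum>i<q. inner_n (n i) (ATv (A i) p (n i) v) (\<lambda>l. u i l - s i l))
    = inner_n p v (\<lambda>t. sumAx q n p A u t - sumAx q n p A s t)"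
  unfolding inner_n_def sum_ATv_mult Av_diff sumAx_def sum_subtractf[symmetric] sum_distrib_left
  by (rule sum.swap)

lemma sum_Mtilde_row_mult:
  "(\<Sum>l<n i. Mtilde_row q n p A \<rho> D i l * D i l)
    = \<rho> * (\<Sum>t<p. sumAx q n p A D t * Av (A i) p (n i) (D i) t) + (\<Sum>t<p. D q t * Av (A i) p (n i) (D i) t)"
proof -
  have "(\<Sum>l<n i. Mtilde_row q n p A \<rho> D i l * D i l) =
      \<rho> * (\<Sum>l<n i. \<Sum>j<q. ATv (A i) p (n i) (Av (A j) p (n j) (D j)) l * D i l)
      + (\<Sum>l<n i. ATv (A i) p (n i) (D q) l * D i l)"
    unfolding Mtilde_row_def
    by (simp add: distrib_right sum.distrib sum_distrib_left sum_distrib_right mult.assoc)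
  also have "(\<Sum>l<n i. \<Sum>j<q. ATv (A i) p (n i) (Av (A j) p (n j) (D j)) l * D i l)
      = (\<Sum>j<q. \<Sum>t<p. Av (A j) p (n j) (D j) t * Av (A i) p (n i) (D i) t)"
    by (subst sum.swap) (simp only: sum_ATv_mult)
  also have "\<dots> = (\<Sum>t<p. sumAx q n p A D t * Av (A i) p (n i) (D i) t)"
    unfolding sumAx_def by (subst sum.swap) (simp add: sum_distrib_right)
  also have "(\<Sum>l<n i. ATv (A i) p (n i) (D q) l * D i l) = (\<Sum>t<p. D q t * Av (A i) p (n i) (D i) t)"
    by (rule sum_ATv_mult)
  finally show ?thesis .
qed

subsection \<open>The proximal step\<close>

lemma sum_power2_affine:
  fixes t :: real
  shows "(\<Sum>j<m. (t * (u j - v j) + (v j - h j))\<^sup>2)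
    = (\<Sum>j<m. (v j - h j)\<^sup>2) + 2 * t * (\<Sum>j<m. (v j - h j) * (u j - v j)) + t\<^sup>2 * (\<Sum>j<m. (u j - v j)\<^sup>2)"
proof -
  have "(\<Sum>j<m. (t * (u j - v j) + (v j - h j))\<^sup>2)
      = (\<Sum>j<m. (v j - h j)\<^sup>2 + 2 * t * ((v j - h j) * (u j - v j)) + t\<^sup>2 * (u j - v j)\<^sup>2)"
    by (intro sum.cong) (auto simp: power2_eq_square algebra_simps)
  then show ?thesis by (simp add: sum.distrib sum_distrib_left)
qed

lemma nonneg_if_nonneg_small_perturbations:
  fixes X C :: real
  assumes C: "0 \<le> C" and h: "\<And>t. 0 < t \<Longrightarrow> t \<le> 1 \<Longrightarrow> 0 \<le> X + t * C"
  shows "0 \<le> X"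
proof (rule ccontr)
  assume X: "\<not> 0 \<le> X"
  define t where "t = min 1 (- X / (C + 1))"
  have "X / (C + 1) < 0" using X C by (intro divide_neg_pos) auto
  then have t0: "0 < t" by (simp add: t_def)
  have "t \<le> - X / (C + 1)" by (simp add: t_def)
  then have "t * (C + 1) \<le> - X" using C by (simp add: field_simps)
  then have "t * C < - X" using t0 by (simp add: algebra_simps)
  moreover have "t \<le> 1" by (simp add: t_def)
  ultimately show False using h[OF t0] by simp
qed

lemma prox_value_finite:
  fixes g :: "(nat \<Rightarrow> real) \<Rightarrow> ereal"
  assumes eta: "0 < \<eta>" and g: "proper_fn m g"
    and opt: "\<forall>u\<in>Vsp m. ereal \<eta> * g v + ereal ((norm2 m (\<lambda>l. v l - h l))\<^sup>2 / 2)
              \<le> ereal \<eta> * g u + ereal ((norm2 m (\<lambda>l. u l - h l))\<^sup>2 / 2)"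
  shows "g v \<noteq> \<infinity>"
proof
  assume "g v = \<infinity>"
  then have "ereal \<eta> * g v + ereal ((norm2 m (\<lambda>l. v l - h l))\<^sup>2 / 2) = \<infinity>" using eta by simp
  moreover from g obtain u0 where u0: "u0 \<in> Vsp m" "g u0 \<noteq> \<infinity>" "g u0 \<noteq> -\<infinity>"
    unfolding proper_fn_def by auto
  moreover have "ereal \<eta> * g v + ereal ((norm2 m (\<lambda>l. v l - h l))\<^sup>2 / 2)
      \<le> ereal \<eta> * g u0 + ereal ((norm2 m (\<lambda>l. u0 l - h l))\<^sup>2 / 2)"
    using opt u0(1) by blast
  ultimately show False by (cases "g u0") auto
qed

text \<open>The minimiser \<open>v\<close> of \<open>\<eta> g + \<parallel>\<cdot> - h\<parallel>\<^sup>2/2\<close> satisfies \<open>h - v \<in> \<eta> \<partial>g(v)\<close>; this follows by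
  comparing \<open>v\<close> with the points \<open>v + t (u - v)\<close> and letting \<open>t \<rightarrow> 0\<close>.\<close>

lemma prox_variational_ineq:
  fixes g :: "(nat \<Rightarrow> real) \<Rightarrow> ereal"
  assumes eta: "0 < \<eta>" and g: "proper_fn m g" "convex_fn m g" and v: "v \<in> Vsp m"
    and opt: "\<forall>u\<in>Vsp m. ereal \<eta> * g v + ereal ((norm2 m (\<lambda>l. v l - h l))\<^sup>2 / 2)
              \<le> ereal \<eta> * g u + ereal ((norm2 m (\<lambda>l. u l - h l))\<^sup>2 / 2)"
    and u: "u \<in> Vsp m" "g u \<noteq> \<infinity>"
  shows "\<eta> * real_of_ereal (g v) + inner_n m (\<lambda>l. h l - v l) (\<lambda>l. u l - v l) \<le> \<eta> * real_of_ereal (g u)"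
proof -
  have not_minf: "g u \<noteq> -\<infinity>" if "u \<in> Vsp m" for u using g that unfolding proper_fn_def by auto
  have fin: "g v \<noteq> \<infinity>" by (rule prox_value_finite[OF eta g(1) opt])
  define a where "a = real_of_ereal (g v)"
  define b where "b = real_of_ereal (g u)"
  have ga: "g v = ereal a" using fin not_minf[OF v] by (cases "g v") (auto simp: a_def)
  have gb: "g u = ereal b" using u not_minf[OF u(1)] by (cases "g u") (auto simp: b_def)
  define P where "P = (\<Sum>j<m. (v j - h j) * (u j - v j))"
  define N0 where "N0 = (\<Sum>j<m. (v j - h j)\<^sup>2)"
  define Nd where "Nd = (\<Sum>j<m. (u j - v j)\<^sup>2)"
  have Nd: "0 \<le> Nd" unfolding Nd_def by (intro sum_nonneg) simp
  have perturbed: "0 \<le> (\<eta> * (b - a) + P) + t * (Nd / 2)" if t: "0 < t" "t \<le> 1" for t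
  proof -
    define w where "w = (\<lambda>j. t * u j + (1 - t) * v j)"
    have w: "w \<in> Vsp m" using u(1) v by (auto simp: Vsp_def w_def)
    have "g w \<le> ereal (t * b + (1 - t) * a)"
      using g(2)[unfolded convex_fn_def, rule_format, of u v b a t] u(1) v t
      unfolding w_def by (simp add: ga gb)
    then have B0: "ereal \<eta> * g w \<le> ereal (\<eta> * (t * b + (1 - t) * a))"
      using eta ereal_mult_left_mono[of "g w" "ereal (t * b + (1 - t) * a)" "ereal \<eta>"] by simp
    have A0: "ereal \<eta> * g v + ereal ((norm2 m (\<lambda>l. v l - h l))\<^sup>2 / 2)
        \<le> ereal \<eta> * g w + ereal ((norm2 m (\<lambda>l. w l - h l))\<^sup>2 / 2)"
      using opt w by blast
    have "ereal \<eta> * g v + ereal ((norm2 m (\<lambda>l. v l - h l))\<^sup>2 / 2)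
        \<le> ereal (\<eta> * (t * b + (1 - t) * a)) + ereal ((norm2 m (\<lambda>l. w l - h l))\<^sup>2 / 2)"
      by (rule order_trans[OF A0 add_right_mono[OF B0]])
    moreover have "(norm2 m (\<lambda>l. w l - h l))\<^sup>2 = (\<Sum>j<m. (t * (u j - v j) + (v j - h j))\<^sup>2)"
      unfolding norm2_power2 w_def by (intro sum.cong refl) (simp add: algebra_simps)
    moreover have "(norm2 m (\<lambda>l. v l - h l))\<^sup>2 = N0" unfolding norm2_power2 N0_def ..
    ultimately have "\<eta> * a + N0 / 2 \<le> \<eta> * (t * b + (1 - t) * a) + (\<Sum>j<m. (t * (u j - v j) + (v j - h j))\<^sup>2) / 2"
      unfolding ga by simp
    then have "\<eta> * a + N0 / 2 \<le> \<eta> * (t * b + (1 - t) * a) + (N0 + 2 * t * P + t\<^sup>2 * Nd) / 2"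
      unfolding sum_power2_affine N0_def P_def Nd_def .
    then have "0 \<le> t * ((\<eta> * (b - a) + P) + t * (Nd / 2))"
      by (simp add: algebra_simps power2_eq_square add_divide_distrib)
    then show ?thesis using t by (simp add: zero_le_mult_iff)
  qed
  have "0 \<le> \<eta> * (b - a) + P"
    by (rule nonneg_if_nonneg_small_perturbations[of "Nd / 2"]) (use Nd perturbed in auto)
  moreover have "inner_n m (\<lambda>l. h l - v l) (\<lambda>l. u l - v l) = - P"
    unfolding inner_n_def P_def by (simp add: sum_negf[symmetric] algebra_simps)
  ultimately show ?thesis by (simp add: a_def b_def algebra_simps)
qed

subsection \<open>The iteration\<close>

definition saddle_pair :: "nat \<Rightarrow> (nat \<Rightarrow> nat) \<Rightarrow> nat \<Rightarrow> (nat \<Rightarrow> (nat \<Rightarrow> real) \<Rightarrow> ereal)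
    \<Rightarrow> (nat \<Rightarrow> nat \<Rightarrow> nat \<Rightarrow> real) \<Rightarrow> (nat \<Rightarrow> real) \<Rightarrow> (nat \<Rightarrow> nat \<Rightarrow> real) \<Rightarrow> (nat \<Rightarrow> real) \<Rightarrow> bool"
  where
  "saddle_pair q n p f A c xs ys \<longleftrightarrow> (\<forall>i<q. xs i \<in> Vsp (n i)) \<and> ys \<in> Vsp p \<and>
     (\<forall>x y. (\<forall>i<q. x i \<in> Vsp (n i)) \<and> y \<in> Vsp p \<longrightarrow>
        Lag0 q n p f A c xs y \<le> Lag0 q n p f A c xs ys \<and> Lag0 q n p f A c xs ys \<le> Lag0 q n p f A c x ys)"

lemma has_saddle_point_iff: "has_saddle_point q n p f A c \<longleftrightarrow> (\<exists>xs ys. saddle_pair q n p f A c xs ys)"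
  unfolding has_saddle_point_def saddle_pair_def by blast

locale forward_reflected_backward =
  fixes q p :: nat and n :: "nat \<Rightarrow> nat"
    and f :: "nat \<Rightarrow> (nat \<Rightarrow> real) \<Rightarrow> ereal"
    and A :: "nat \<Rightarrow> nat \<Rightarrow> nat \<Rightarrow> real"
    and c :: "nat \<Rightarrow> real"
    and \<rho> Lt \<eta> :: real
    and x :: "nat \<Rightarrow> int \<Rightarrow> nat \<Rightarrow> real"
    and y :: "int \<Rightarrow> nat \<Rightarrow> real"
  assumes f_prop: "\<And>i. i < q \<Longrightarrow> proper_fn (n i) (f i) \<and> closed_fn (n i) (f i) \<and> convex_fn (n i) (f i)"
    and c_in: "c \<in> Vsp p"
    and saddle: "has_saddle_point q n p f A c"
    and rho: "0 \<le> \<rho>"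
    and Lt_pos: "0 < Lt" and Lt_bd: "spec_norm (off n q + p) (Mtilde q n p A \<rho>) \<le> Lt"
    and eta_pos: "0 < \<eta>" and eta_bd: "\<eta> < 1 / (2 * Lt)"
    and x_step: "\<And>i k. i < q \<Longrightarrow>
       (let xhat = (\<lambda>l. x i (int k) l
              - 2 * \<eta> * ATv (A i) p (n i) (y (int k)) l
              - 2 * \<eta> * \<rho> * (\<Sum>j<q. ATv (A i) p (n i) (Av (A j) p (n j) (x j (int k))) l)
              + \<eta> * ATv (A i) p (n i) (y (int k - 1)) l
              + \<eta> * \<rho> * (\<Sum>j<q. ATv (A i) p (n i) (Av (A j) p (n j) (x j (int k - 1))) l)
              + \<eta> * \<rho> * ATv (A i) p (n i) c l)
        in x i (int k + 1) \<in> Vsp (n i) \<and>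
           (\<forall>u\<in>Vsp (n i).
              ereal \<eta> * f i (x i (int k + 1)) + ereal ((norm2 (n i) (\<lambda>l. x i (int k + 1) l - xhat l))\<^sup>2 / 2)
              \<le> ereal \<eta> * f i u + ereal ((norm2 (n i) (\<lambda>l. u l - xhat l))\<^sup>2 / 2)))"
    and y_step: "\<And>k. y (int k + 1) = (\<lambda>r. y (int k) r
              + 2 * \<eta> * sumAx q n p A (\<lambda>i. x i (int k)) r
              - \<eta> * sumAx q n p A (\<lambda>i. x i (int k - 1)) r
              - \<eta> * c r)"
begin

lemma f_ereal: "i < q \<Longrightarrow> v \<in> Vsp (n i) \<Longrightarrow> f i v \<noteq> \<infinity> \<Longrightarrow> ereal (real_of_ereal (f i v)) = f i v"
  using f_prop[of i] unfolding proper_fn_def by (cases "f i v") auto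

lemma sum_f_ereal:
  assumes "\<And>i. i < q \<Longrightarrow> v i \<in> Vsp (n i) \<and> f i (v i) \<noteq> \<infinity>"
  shows "(\<Sum>i<q. f i (v i)) = ereal (\<Sum>i<q. real_of_ereal (f i (v i)))"
proof -
  have "(\<Sum>i<q. f i (v i)) = (\<Sum>i<q. ereal (real_of_ereal (f i (v i))))"
    by (intro sum.cong) (auto simp: f_ereal assms)
  then show ?thesis by simp
qed

definition dim :: "nat \<Rightarrow> nat" where
  "dim i = (if i < q then n i else p)"

definition bsum :: "(nat \<Rightarrow> nat \<Rightarrow> real) \<Rightarrow> real" where
  "bsum P = (\<Sum>i<Suc q. \<Sum>l<dim i. P i l)"

definition bdist2 :: "(nat \<Rightarrow> nat \<Rightarrow> real) \<Rightarrow> (nat \<Rightarrow> nat \<Rightarrow> real) \<Rightarrow> real" where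
  "bdist2 U V = bsum (\<lambda>i l. (U i l - V i l)\<^sup>2)"

lemma bsum_add: "bsum (\<lambda>i l. P i l + Q i l) = bsum P + bsum Q"
  unfolding bsum_def by (simp add: sum.distrib)

lemma bsum_diff: "bsum (\<lambda>i l. P i l - Q i l) = bsum P - bsum Q"
  unfolding bsum_def by (simp add: sum_subtractf)

lemma bsum_mult: "bsum (\<lambda>i l. a * P i l) = a * bsum P"
  unfolding bsum_def by (simp only: sum_distrib_left)

lemma bsum_cong: "(\<And>i l. i < Suc q \<Longrightarrow> l < dim i \<Longrightarrow> P i l = Q i l) \<Longrightarrow> bsum P = bsum Q"
  unfolding bsum_def by (intro sum.cong refl) auto

lemma bsum_mono: "(\<And>i l. i < Suc q \<Longrightarrow> l < dim i \<Longrightarrow> P i l \<le> Q i l) \<Longrightarrow> bsum P \<le> bsum Q"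
  unfolding bsum_def by (intro sum_mono) auto

lemma bsum_nonneg: "(\<And>i l. i < Suc q \<Longrightarrow> l < dim i \<Longrightarrow> 0 \<le> P i l) \<Longrightarrow> 0 \<le> bsum P"
  unfolding bsum_def by (intro sum_nonneg) auto

lemma bsum_split: "bsum P = (\<Sum>i<q. \<Sum>l<n i. P i l) + (\<Sum>l<p. P q l)"
  unfolding bsum_def by (simp add: dim_def)

lemma bsum_power2_nonneg: "0 \<le> bsum (\<lambda>i l. (P i l)\<^sup>2)"
  by (rule bsum_nonneg) simp

lemma bdist2_nonneg: "0 \<le> bdist2 U V"
  unfolding bdist2_def by (rule bsum_power2_nonneg)

lemma power2_le_bsum:
  assumes "i < Suc q" "l < dim i"
  shows "(P i l)\<^sup>2 \<le> bsum (\<lambda>i l. (P i l)\<^sup>2)"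
proof -
  have "(P i l)\<^sup>2 \<le> (\<Sum>l<dim i. (P i l)\<^sup>2)" using assms by (intro member_le_sum) auto
  also have "\<dots> \<le> bsum (\<lambda>i l. (P i l)\<^sup>2)" unfolding bsum_def using assms
    by (intro member_le_sum[of i "{..<Suc q}" "\<lambda>i. \<Sum>l<dim i. (P i l)\<^sup>2"] sum_nonneg) auto
  finally show ?thesis .
qed

lemma norm2_block_le_bdist2:
  assumes "i < q"
  shows "norm2 (n i) (\<lambda>l. U i l - V i l) \<le> sqrt (bdist2 U V)"
proof -
  have "(\<Sum>l<n i. (U i l - V i l)\<^sup>2) \<le> (\<Sum>i<q. \<Sum>l<n i. (U i l - V i l)\<^sup>2)"
    using assms by (intro member_le_sum[of i "{..<q}" "\<lambda>i. \<Sum>l<n i. (U i l - V i l)\<^sup>2"] sum_nonneg) auto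
  also have "\<dots> \<le> bdist2 U V"
    unfolding bdist2_def bsum_split by (simp add: sum_nonneg)
  finally show ?thesis unfolding norm2_def by (rule real_sqrt_le_mono)
qed

lemma bdist2_triangle: "bdist2 U W \<le> 2 * bdist2 U V + 2 * bdist2 V W"
proof -
  have "(a - c)\<^sup>2 \<le> 2 * (a - b)\<^sup>2 + 2 * (b - c)\<^sup>2" for a b c :: real
  proof -
    have "0 \<le> (a - 2 * b + c)\<^sup>2" by simp
    then show ?thesis by (simp add: power2_eq_square algebra_simps)
  qed
  then show ?thesis unfolding bdist2_def bsum_mult[symmetric] bsum_add[symmetric] by (rule bsum_mono)
qed

lemma tendsto_bdist2_0I:
  assumes "\<And>i l. i < Suc q \<Longrightarrow> l < dim i \<Longrightarrow> (\<lambda>j. V j i l) \<longlonglongrightarrow> U i l"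
  shows "(\<lambda>j. bdist2 (V j) U) \<longlonglongrightarrow> 0"
proof -
  have "(\<lambda>j. bdist2 (V j) U) \<longlonglongrightarrow> (\<Sum>i<Suc q. \<Sum>l<dim i. (U i l - U i l)\<^sup>2)"
    unfolding bdist2_def bsum_def by (intro tendsto_sum tendsto_intros assms) auto
  then show ?thesis by simp
qed

lemma tendsto_bdist2_0D:
  assumes "(\<lambda>j. bdist2 (V j) U) \<longlonglongrightarrow> 0" "i < Suc q" "l < dim i"
  shows "(\<lambda>j. V j i l) \<longlonglongrightarrow> U i l"
proof -
  have "(\<lambda>j. (V j i l - U i l)\<^sup>2) \<longlonglongrightarrow> 0"
    by (rule tendsto_0_squeeze[OF _ power2_le_bsum[OF assms(2,3)] assms(1)[unfolded bdist2_def]]) simp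
  then have "(\<lambda>j. V j i l - U i l) \<longlonglongrightarrow> 0" by (rule tendsto_0_if_power2_tendsto_0)
  then show ?thesis by (simp add: LIM_zero_iff)
qed

text \<open>The operator \<open>F U = M\<^sub>\<rho> U + b\<close> of the saddle-point problem, with \<open>b = (-\<rho> A\<^sub>i\<^sup>T c, c)\<close>.\<close>

definition saddle_op :: "(nat \<Rightarrow> nat \<Rightarrow> real) \<Rightarrow> nat \<Rightarrow> nat \<Rightarrow> real" where
  "saddle_op U i l = (if i < q then Mtilde_row q n p A \<rho> U i l - \<rho> * ATv (A i) p (n i) c l
     else c l - sumAx q n p A U l)"

lemma saddle_op_diff_block:
  "i < q \<Longrightarrow> saddle_op U i l - saddle_op V i l = Mtilde_row q n p A \<rho> (\<lambda>i l. U i l - V i l) i l"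
  by (simp add: saddle_op_def Mtilde_row_diff)

lemma saddle_op_diff_last:
  "saddle_op U q l - saddle_op V q l = - sumAx q n p A (\<lambda>i l. U i l - V i l) l"
  by (simp add: saddle_op_def sumAx_diff)

lemma saddle_op_block_eq_ATv:
  assumes "i < q"
  shows "saddle_op U i = ATv (A i) p (n i) (\<lambda>t. \<rho> * (sumAx q n p A U t - c t) + U q t)"
proof
  fix l
  have "(\<Sum>j<q. \<Sum>t<p. \<rho> * (A i t l * Av (A j) p (n j) (U j) t))
      = (\<Sum>t<p. \<Sum>j<q. \<rho> * (A i t l * Av (A j) p (n j) (U j) t))"
    by (rule sum.swap)
  then show "saddle_op U i l = ATv (A i) p (n i) (\<lambda>t. \<rho> * (sumAx q n p A U t - c t) + U q t) l"
    using assms unfolding saddle_op_def Mtilde_row_def ATv_def sumAx_def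
    by (simp add: algebra_simps sum.distrib sum_subtractf sum_distrib_left)
qed

lemma saddle_op_lipschitz: "bdist2 (saddle_op U) (saddle_op V) \<le> Lt\<^sup>2 * bdist2 U V"
proof -
  let ?D = "\<lambda>i l. U i l - V i l"
  have "bdist2 (saddle_op U) (saddle_op V) =
      (\<Sum>i<q. \<Sum>l<n i. (Mtilde_row q n p A \<rho> ?D i l)\<^sup>2) + (\<Sum>m<p. (sumAx q n p A ?D m)\<^sup>2)"
    unfolding bdist2_def bsum_split
    by (simp add: saddle_op_diff_block saddle_op_diff_last cong: sum.cong_simp)
  also have "\<dots> \<le> Lt\<^sup>2 * ((\<Sum>i<q. \<Sum>l<n i. (?D i l)\<^sup>2) + (\<Sum>m<p. (?D q m)\<^sup>2))"
    by (rule Mtilde_blocks_lipschitz[OF Lt_bd])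
  also have "\<dots> = Lt\<^sup>2 * bdist2 U V"
    unfolding bdist2_def bsum_split ..
  finally show ?thesis .
qed

text \<open>The skew part of \<open>M\<^sub>\<rho>\<close> cancels, leaving \<open>\<rho> \<parallel>\<Sum> A\<^sub>j D\<^sub>j\<parallel>\<^sup>2\<close> for \<open>D = U - V\<close>.\<close>

lemma saddle_op_monotone: "0 \<le> bsum (\<lambda>i l. (saddle_op U i l - saddle_op V i l) * (U i l - V i l))"
proof -
  let ?D = "\<lambda>i l. U i l - V i l"
  define S where "S = sumAx q n p A ?D"
  have swap: "(\<Sum>i<q. \<Sum>t<p. g t * Av (A i) p (n i) (?D i) t) = (\<Sum>t<p. g t * S t)" for g
    unfolding S_def sumAx_def by (subst sum.swap) (simp add: sum_distrib_left)
  have block: "(\<Sum>l<n i. Mtilde_row q n p A \<rho> ?D i l * ?D i l)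
      = \<rho> * (\<Sum>t<p. S t * Av (A i) p (n i) (?D i) t) + (\<Sum>t<p. ?D q t * Av (A i) p (n i) (?D i) t)" for i
    unfolding S_def by (rule sum_Mtilde_row_mult)
  have "bsum (\<lambda>i l. (saddle_op U i l - saddle_op V i l) * ?D i l)
      = (\<Sum>i<q. \<Sum>l<n i. Mtilde_row q n p A \<rho> ?D i l * ?D i l) + (\<Sum>m<p. - S m * ?D q m)"
    unfolding bsum_split S_def by (simp add: saddle_op_diff_block saddle_op_diff_last cong: sum.cong_simp)
  also have "\<dots> = \<rho> * (\<Sum>t<p. S t * S t) + (\<Sum>t<p. ?D q t * S t) + (\<Sum>m<p. - S m * ?D q m)"
    unfolding block sum.distrib sum_distrib_left[symmetric] swap ..
  also have "\<dots> = \<rho> * (\<Sum>t<p. S t * S t)"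
    by (simp add: sum_negf mult.commute)
  also have "\<dots> \<ge> 0" by (intro mult_nonneg_nonneg[OF rho] sum_nonneg) simp
  finally show ?thesis .
qed

lemma saddle_op_tendsto:
  assumes "(\<lambda>j. bdist2 (V j) U) \<longlonglongrightarrow> 0"
  shows "(\<lambda>j. bdist2 (saddle_op (V j)) (saddle_op U)) \<longlonglongrightarrow> 0"
  by (rule tendsto_0_squeeze[OF bdist2_nonneg saddle_op_lipschitz tendsto_mult_right_zero[OF assms]])

text \<open>\<open>z k\<close> is the stacked iterate at time \<open>k - 1\<close>, so that \<open>z 0\<close> is the initial point
  \<open>(x\<^sub>i,\<^sub>-\<^sub>1, y\<^sub>-\<^sub>1)\<close>; \<open>w k\<close> is the reflected forward step producing \<open>z (k + 2)\<close>.\<close>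

definition z :: "nat \<Rightarrow> nat \<Rightarrow> nat \<Rightarrow> real" where
  "z k i = (if i < q then x i (int k - 1) else y (int k - 1))"

definition w :: "nat \<Rightarrow> nat \<Rightarrow> nat \<Rightarrow> real" where
  "w k i l = z (Suc k) i l - \<eta> * (2 * saddle_op (z (Suc k)) i l - saddle_op (z k) i l)"

lemma z_block: "i < q \<Longrightarrow> z k i = x i (int k - 1)"
  by (simp add: z_def)

lemma z_last: "z k q = y (int k - 1)"
  by (simp add: z_def)

lemma xhat_eq_w:
  assumes i: "i < q"
  shows "(\<lambda>l. x i (int k) l
              - 2 * \<eta> * ATv (A i) p (n i) (y (int k)) l
              - 2 * \<eta> * \<rho> * (\<Sum>j<q. ATv (A i) p (n i) (Av (A j) p (n j) (x j (int k))) l)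
              + \<eta> * ATv (A i) p (n i) (y (int k - 1)) l
              + \<eta> * \<rho> * (\<Sum>j<q. ATv (A i) p (n i) (Av (A j) p (n j) (x j (int k - 1))) l)
              + \<eta> * \<rho> * ATv (A i) p (n i) c l) = w k i"
proof -
  have "(\<Sum>j<q. ATv (A i) p (n i) (Av (A j) p (n j) (z (Suc k) j)) l)
      = (\<Sum>j<q. ATv (A i) p (n i) (Av (A j) p (n j) (x j (int k))) l)"
    "(\<Sum>j<q. ATv (A i) p (n i) (Av (A j) p (n j) (z k j)) l)
      = (\<Sum>j<q. ATv (A i) p (n i) (Av (A j) p (n j) (x j (int k - 1))) l)" for l
    by (auto simp: z_block intro!: sum.cong)
  then show ?thesis
    unfolding w_def saddle_op_def Mtilde_row_def using i
    by (intro ext) (simp add: z_block z_last algebra_simps)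
qed

lemma z_Suc_Suc_last: "z (Suc (Suc k)) q = w k q"
proof -
  have "sumAx q n p A (z (Suc k)) = sumAx q n p A (\<lambda>i. x i (int k))"
    "sumAx q n p A (z k) = sumAx q n p A (\<lambda>i. x i (int k - 1))"
    by (auto simp: z_block intro!: sumAx_cong)
  moreover have "z (Suc (Suc k)) q = y (int k + 1)" by (simp add: z_last add.commute)
  ultimately show ?thesis
    unfolding w_def saddle_op_def y_step by (intro ext) (simp add: z_last algebra_simps)
qed

lemma prox_step_ineq:
  assumes i: "i < q"
  shows "z (Suc (Suc k)) i \<in> Vsp (n i) \<and> f i (z (Suc (Suc k)) i) \<noteq> \<infinity> \<and>
    (\<forall>u\<in>Vsp (n i). f i u \<noteq> \<infinity> \<longrightarrow> \<eta> * real_of_ereal (f i (z (Suc (Suc k)) i))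
        + inner_n (n i) (\<lambda>l. w k i l - z (Suc (Suc k)) i l) (\<lambda>l. u l - z (Suc (Suc k)) i l)
       \<le> \<eta> * real_of_ereal (f i u))"
proof -
  have "z (Suc (Suc k)) i = x i (int k + 1)" using i by (simp add: z_block add.commute)
  moreover have "x i (int k + 1) \<in> Vsp (n i) \<and>
      (\<forall>u\<in>Vsp (n i).
         ereal \<eta> * f i (x i (int k + 1)) + ereal ((norm2 (n i) (\<lambda>l. x i (int k + 1) l - w k i l))\<^sup>2 / 2)
         \<le> ereal \<eta> * f i u + ereal ((norm2 (n i) (\<lambda>l. u l - w k i l))\<^sup>2 / 2))"
    using x_step[OF i, of k] unfolding Let_def xhat_eq_w[OF i] .
  ultimately show ?thesis
    using prox_value_finite[OF eta_pos] prox_variational_ineq[OF eta_pos] f_prop[OF i] by auto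
qed

text \<open>\<open>s\<close> is a KKT point iff \<open>0 \<in> (\<partial>f\<^sub>1 \<times> \<dots> \<times> \<partial>f\<^sub>q \<times> {0}) s + F s\<close>.\<close>

definition kkt_point :: "(nat \<Rightarrow> nat \<Rightarrow> real) \<Rightarrow> bool" where
  "kkt_point s \<longleftrightarrow> (\<forall>i<q. s i \<in> Vsp (n i) \<and> f i (s i) \<noteq> \<infinity> \<and>
      (\<forall>u\<in>Vsp (n i). f i u \<noteq> \<infinity> \<longrightarrow>
         real_of_ereal (f i (s i)) \<le> real_of_ereal (f i u) + inner_n (n i) (saddle_op s i) (\<lambda>l. u l - s i l)))
    \<and> (\<forall>r<p. saddle_op s q r = 0)"

lemma kkt_point_is_solution:
  assumes s: "kkt_point s"
  shows "is_solution q n p f A c s"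
proof -
  have feasible: "sumAx q n p A s r = c r" if "r < p" for r
    using s that unfolding kkt_point_def saddle_op_def by auto
  have s_Vsp: "\<forall>i<q. s i \<in> Vsp (n i)" using s unfolding kkt_point_def by auto
  have "(\<Sum>i<q. f i (s i)) \<le> (\<Sum>i<q. f i (u i))"
    if u: "\<forall>i<q. u i \<in> Vsp (n i)" "\<forall>r<p. sumAx q n p A u r = c r" for u
  proof (cases "\<exists>i<q. f i (u i) = \<infinity>")
    case True
    then have "(\<Sum>i<q. f i (u i)) = \<infinity>" by (auto simp: sum_Pinfty)
    then show ?thesis by simp
  next
    case False
    have block: "real_of_ereal (f i (s i)) \<le> real_of_ereal (f i (u i))
        + inner_n (n i) (ATv (A i) p (n i) (s q)) (\<lambda>l. u i l - s i l)" if i: "i < q" for i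
    proof -
      have "saddle_op s i = ATv (A i) p (n i) (s q)"
        unfolding saddle_op_block_eq_ATv[OF i] by (rule ATv_cong) (simp add: feasible)
      then show ?thesis using s i u False unfolding kkt_point_def by auto
    qed
    have inner_0: "(\<Sum>i<q. inner_n (n i) (ATv (A i) p (n i) (s q)) (\<lambda>l. u i l - s i l)) = 0"
      unfolding sum_inner_ATv using u feasible by (simp add: inner_n_def)
    have "(\<Sum>i<q. real_of_ereal (f i (s i))) \<le> (\<Sum>i<q. real_of_ereal (f i (u i))
        + inner_n (n i) (ATv (A i) p (n i) (s q)) (\<lambda>l. u i l - s i l))"
      by (rule sum_mono) (simp add: block)
    then have "(\<Sum>i<q. real_of_ereal (f i (s i))) \<le> (\<Sum>i<q. real_of_ereal (f i (u i)))"
      by (simp add: sum.distrib inner_0)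
    moreover have "(\<Sum>i<q. f i (s i)) = ereal (\<Sum>i<q. real_of_ereal (f i (s i)))"
      using s by (intro sum_f_ereal) (auto simp: kkt_point_def)
    moreover have "(\<Sum>i<q. f i (u i)) = ereal (\<Sum>i<q. real_of_ereal (f i (u i)))"
      using u False by (intro sum_f_ereal) auto
    ultimately show ?thesis by simp
  qed
  then show ?thesis unfolding is_solution_def using s_Vsp feasible by blast
qed

context
  fixes xs ys
  assumes sp: "saddle_pair q n p f A c xs ys"
begin

lemma saddle_f_finite: "i < q \<Longrightarrow> f i (xs i) \<noteq> \<infinity>"
proof -
  have "\<forall>i<q. \<exists>v. v \<in> Vsp (n i) \<and> f i v \<noteq> \<infinity>" using f_prop unfolding proper_fn_def by blast
  then obtain x0 where x0: "\<And>i. i < q \<Longrightarrow> x0 i \<in> Vsp (n i) \<and> f i (x0 i) \<noteq> \<infinity>" by metis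
  have "Lag0 q n p f A c xs ys \<le> Lag0 q n p f A c x0 ys"
    using sp x0 unfolding saddle_pair_def by blast
  moreover have "Lag0 q n p f A c x0 ys \<noteq> \<infinity>"
    using sum_f_ereal[OF x0] unfolding Lag0_def by simp
  ultimately have "Lag0 q n p f A c xs ys \<noteq> \<infinity>" by (metis ereal_infty_less_eq(1))
  then have "(\<Sum>i<q. f i (xs i)) \<noteq> \<infinity>" unfolding Lag0_def by auto
  then show "i < q \<Longrightarrow> f i (xs i) \<noteq> \<infinity>" by (auto simp: sum_Pinfty)
qed

lemma saddle_Lag0_eq:
  "Lag0 q n p f A c xs v = ereal ((\<Sum>i<q. real_of_ereal (f i (xs i)))
     + inner_n p v (\<lambda>t. sumAx q n p A xs t - c t))"
  using sp saddle_f_finite unfolding Lag0_def saddle_pair_def by (simp add: sum_f_ereal)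

text \<open>Maximality in \<open>y\<close>, tested in the direction of the residual, forces feasibility.\<close>

lemma saddle_feasible:
  assumes "r < p"
  shows "sumAx q n p A xs r = c r"
proof -
  define R where "R t = sumAx q n p A xs t - c t" for t
  have "(\<lambda>t. ys t + R t) \<in> Vsp p"
    using sp c_in unfolding saddle_pair_def Vsp_def R_def by (auto simp: sumAx_beyond)
  then have "Lag0 q n p f A c xs (\<lambda>t. ys t + R t) \<le> Lag0 q n p f A c xs ys"
    using sp unfolding saddle_pair_def by blast
  then have "inner_n p (\<lambda>t. ys t + R t) R \<le> inner_n p ys R"
    unfolding saddle_Lag0_eq R_def by simp
  moreover have "inner_n p (\<lambda>t. ys t + R t) R = inner_n p ys R + (\<Sum>t<p. R t * R t)"
    unfolding inner_n_def by (simp add: distrib_right sum.distrib)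
  ultimately have "(\<Sum>t<p. R t * R t) = 0" by (simp add: antisym sum_nonneg)
  then have "\<forall>t\<in>{..<p}. R t * R t = 0" by (subst (asm) sum_nonneg_eq_0_iff) auto
  then show ?thesis using assms by (simp add: R_def)
qed

lemma saddle_block_ineq:
  assumes i: "i < q" and u: "u \<in> Vsp (n i)" "f i u \<noteq> \<infinity>"
  shows "real_of_ereal (f i (xs i))
    \<le> real_of_ereal (f i u) + inner_n (n i) (ATv (A i) p (n i) ys) (\<lambda>l. u l - xs i l)"
proof -
  define a where "a j = real_of_ereal (f j (xs j))" for j
  define xs' where "xs' = xs(i := u)"
  have xs': "\<forall>j<q. xs' j \<in> Vsp (n j)" using sp u unfolding xs'_def saddle_pair_def by auto
  have "(\<Sum>j<q. f j (xs' j)) = ereal (\<Sum>j<q. if j = i then real_of_ereal (f i u) else a j)"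
    using sp u saddle_f_finite unfolding saddle_pair_def xs'_def a_def
    by (subst sum_f_ereal) (auto intro!: sum.cong)
  then have f_xs': "(\<Sum>j<q. f j (xs' j)) = ereal ((\<Sum>j<q. a j) + (real_of_ereal (f i u) - a i))"
    by (simp add: sum_if_eq_update[OF i])
  have sumAx_xs': "sumAx q n p A xs' t
      = sumAx q n p A xs t + (Av (A i) p (n i) u t - Av (A i) p (n i) (xs i) t)" for t
  proof -
    have "sumAx q n p A xs' t
        = (\<Sum>j<q. if j = i then Av (A i) p (n i) u t else Av (A j) p (n j) (xs j) t)"
      unfolding sumAx_def xs'_def by (intro sum.cong) auto
    then show ?thesis unfolding sumAx_def by (simp add: sum_if_eq_update[OF i])
  qed
  have "inner_n p ys (\<lambda>t. sumAx q n p A xs' t - c t)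
      = (\<Sum>t<p. ys t * (Av (A i) p (n i) u t - Av (A i) p (n i) (xs i) t))"
    unfolding inner_n_def sumAx_xs' by (intro sum.cong) (auto simp: saddle_feasible algebra_simps)
  also have "\<dots> = inner_n (n i) (ATv (A i) p (n i) ys) (\<lambda>l. u l - xs i l)"
    unfolding inner_n_def sum_ATv_mult Av_diff ..
  finally have inner_xs': "inner_n p ys (\<lambda>t. sumAx q n p A xs' t - c t)
      = inner_n (n i) (ATv (A i) p (n i) ys) (\<lambda>l. u l - xs i l)" .
  have "inner_n p ys (\<lambda>t. sumAx q n p A xs t - c t) = 0"
    unfolding inner_n_def by (simp add: saddle_feasible)
  moreover have "Lag0 q n p f A c xs ys \<le> Lag0 q n p f A c xs' ys"
    using sp xs' unfolding saddle_pair_def by blast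
  then have "ereal ((\<Sum>j<q. a j) + inner_n p ys (\<lambda>t. sumAx q n p A xs t - c t))
      \<le> (\<Sum>j<q. f j (xs' j)) + ereal (inner_n p ys (\<lambda>t. sumAx q n p A xs' t - c t))"
    unfolding saddle_Lag0_eq a_def by (simp add: Lag0_def)
  ultimately show ?thesis unfolding f_xs' inner_xs' by (simp add: a_def)
qed

end

lemma kkt_point_exists: "\<exists>s. kkt_point s"
proof -
  obtain xs ys where sp: "saddle_pair q n p f A c xs ys"
    using saddle has_saddle_point_iff by blast
  define s where "s i = (if i < q then xs i else ys)" for i
  have sumAx_s: "sumAx q n p A s = sumAx q n p A xs" by (rule sumAx_cong) (simp add: s_def)
  have "saddle_op s i = ATv (A i) p (n i) ys" if i: "i < q" for i
    unfolding saddle_op_block_eq_ATv[OF i] sumAx_s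
    by (rule ATv_cong) (simp add: s_def saddle_feasible[OF sp])
  moreover have "saddle_op s q r = 0" if "r < p" for r
    using that by (simp add: saddle_op_def sumAx_s saddle_feasible[OF sp])
  ultimately have "kkt_point s"
    using sp saddle_f_finite[OF sp] saddle_block_ineq[OF sp]
    unfolding kkt_point_def saddle_pair_def by (simp add: s_def)
  then show ?thesis by blast
qed

subsection \<open>The Lyapunov function\<close>

text \<open>The proximal inequality for \<open>z (k + 2)\<close> tested at \<open>s\<close>, plus the KKT inequality for \<open>s\<close>
  tested at \<open>z (k + 2)\<close>.\<close>

lemma kkt_step_ineq:
  assumes s: "kkt_point s"
  shows "bsum (\<lambda>i l. (w k i l - z (Suc (Suc k)) i l) * (s i l - z (Suc (Suc k)) i l)
      - \<eta> * saddle_op s i l * (z (Suc (Suc k)) i l - s i l)) \<le> 0"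
proof -
  let ?z = "z (Suc (Suc k))"
  have "(\<Sum>l<n i. (w k i l - ?z i l) * (s i l - ?z i l) - \<eta> * saddle_op s i l * (?z i l - s i l)) \<le> 0"
    if i: "i < q" for i
  proof -
    have z: "?z i \<in> Vsp (n i)" "f i (?z i) \<noteq> \<infinity>"
      and prox: "\<forall>u\<in>Vsp (n i). f i u \<noteq> \<infinity> \<longrightarrow> \<eta> * real_of_ereal (f i (?z i))
        + inner_n (n i) (\<lambda>l. w k i l - ?z i l) (\<lambda>l. u l - ?z i l) \<le> \<eta> * real_of_ereal (f i u)"
      using prox_step_ineq[OF i, of k] by auto
    have s_i: "s i \<in> Vsp (n i)" "f i (s i) \<noteq> \<infinity>"
      and kkt: "\<forall>u\<in>Vsp (n i). f i u \<noteq> \<infinity> \<longrightarrow>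
        real_of_ereal (f i (s i)) \<le> real_of_ereal (f i u) + inner_n (n i) (saddle_op s i) (\<lambda>l. u l - s i l)"
      using s i unfolding kkt_point_def by auto
    have "\<eta> * real_of_ereal (f i (?z i)) + inner_n (n i) (\<lambda>l. w k i l - ?z i l) (\<lambda>l. s i l - ?z i l)
        \<le> \<eta> * real_of_ereal (f i (s i))"
      using prox s_i by auto
    moreover have "\<eta> * real_of_ereal (f i (s i))
        \<le> \<eta> * (real_of_ereal (f i (?z i)) + inner_n (n i) (saddle_op s i) (\<lambda>l. ?z i l - s i l))"
      using kkt z eta_pos by (intro mult_left_mono) auto
    moreover have "(\<Sum>l<n i. (w k i l - ?z i l) * (s i l - ?z i l) - \<eta> * saddle_op s i l * (?z i l - s i l))
        = inner_n (n i) (\<lambda>l. w k i l - ?z i l) (\<lambda>l. s i l - ?z i l)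
          - \<eta> * inner_n (n i) (saddle_op s i) (\<lambda>l. ?z i l - s i l)"
      unfolding inner_n_def by (simp add: sum_subtractf sum_distrib_left mult.assoc)
    ultimately show ?thesis by (simp add: algebra_simps)
  qed
  then have "(\<Sum>i<q. \<Sum>l<n i. (w k i l - ?z i l) * (s i l - ?z i l) - \<eta> * saddle_op s i l * (?z i l - s i l)) \<le> 0"
    by (rule sum_nonpos) simp
  moreover have "(\<Sum>l<p. (w k q l - ?z q l) * (s q l - ?z q l) - \<eta> * saddle_op s q l * (?z q l - s q l)) = 0"
    using s unfolding kkt_point_def z_Suc_Suc_last by simp
  ultimately show ?thesis unfolding bsum_split by simp
qed

text \<open>Completing the square: \<open>2 \<langle>a, T\<rangle> \<ge> -L \<parallel>T\<parallel>\<^sup>2 - \<parallel>a\<parallel>\<^sup>2 / L\<close> with \<open>\<parallel>a\<parallel> \<le> L \<parallel>b - e\<parallel>\<close>.\<close>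

lemma saddle_op_cross_term_bound:
  "0 \<le> bsum (\<lambda>i l. Lt * (T i l)\<^sup>2 + 2 * (saddle_op b i l - saddle_op e i l) * T i l + Lt * (b i l - e i l)\<^sup>2)"
proof -
  let ?a = "\<lambda>i l. saddle_op b i l - saddle_op e i l"
  have "Lt * bsum (\<lambda>i l. Lt * (T i l)\<^sup>2 + 2 * ?a i l * T i l + Lt * (b i l - e i l)\<^sup>2)
      = bsum (\<lambda>i l. (?a i l + Lt * T i l)\<^sup>2) - bdist2 (saddle_op b) (saddle_op e) + Lt\<^sup>2 * bdist2 b e"
    unfolding bdist2_def bsum_mult[symmetric] bsum_add[symmetric] bsum_diff[symmetric]
    by (intro bsum_cong) (simp add: power2_eq_square algebra_simps)
  also have "\<dots> \<ge> 0"
    using saddle_op_lipschitz[of b e] bsum_power2_nonneg[of "\<lambda>i l. ?a i l + Lt * T i l"] by simp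
  finally show ?thesis using Lt_pos by (simp add: zero_le_mult_iff)
qed

definition lyap :: "(nat \<Rightarrow> nat \<Rightarrow> real) \<Rightarrow> nat \<Rightarrow> real" where
  "lyap s k = bsum (\<lambda>i l. (z (Suc k) i l - s i l)\<^sup>2
     - 2 * \<eta> * (saddle_op (z (Suc k)) i l - saddle_op (z k) i l) * (z (Suc k) i l - s i l)
     + \<eta> * Lt * (z (Suc k) i l - z k i l)\<^sup>2)"

lemma one_minus_2_eta_Lt_pos: "0 < 1 - 2 * \<eta> * Lt"
  using eta_bd Lt_pos by (simp add: field_simps)

lemma one_minus_eta_Lt_pos: "0 < 1 - \<eta> * Lt"
  using one_minus_2_eta_Lt_pos mult_pos_pos[OF eta_pos Lt_pos] by linarith

lemma lyap_descent:
  assumes s: "kkt_point s"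
  shows "lyap s (Suc k) + (1 - 2 * \<eta> * Lt) * bdist2 (z (Suc (Suc k))) (z (Suc k)) \<le> lyap s k"
proof -
  let ?a = "z (Suc (Suc k))" and ?b = "z (Suc k)" and ?e = "z k"
  define E1 where "E1 = bsum (\<lambda>i l. (w k i l - ?a i l) * (s i l - ?a i l) - \<eta> * saddle_op s i l * (?a i l - s i l))"
  define E2 where "E2 = bsum (\<lambda>i l. (saddle_op ?a i l - saddle_op s i l) * (?a i l - s i l))"
  define E3 where "E3 = bsum (\<lambda>i l. Lt * (?a i l - ?b i l)\<^sup>2
      + 2 * (saddle_op ?b i l - saddle_op ?e i l) * (?a i l - ?b i l) + Lt * (?b i l - ?e i l)\<^sup>2)"
  have "lyap s k - lyap s (Suc k) - (1 - 2 * \<eta> * Lt) * bdist2 ?a ?b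
     = bsum (\<lambda>i l. ((?b i l - s i l)\<^sup>2 - 2 * \<eta> * (saddle_op ?b i l - saddle_op ?e i l) * (?b i l - s i l)
            + \<eta> * Lt * (?b i l - ?e i l)\<^sup>2)
          - ((?a i l - s i l)\<^sup>2 - 2 * \<eta> * (saddle_op ?a i l - saddle_op ?b i l) * (?a i l - s i l)
            + \<eta> * Lt * (?a i l - ?b i l)\<^sup>2)
          - (1 - 2 * \<eta> * Lt) * (?a i l - ?b i l)\<^sup>2)"
    unfolding lyap_def bdist2_def by (simp only: bsum_diff bsum_mult)
  also have "\<dots> = bsum (\<lambda>i l. (-2) * ((w k i l - ?a i l) * (s i l - ?a i l) - \<eta> * saddle_op s i l * (?a i l - s i l))
      + (2 * \<eta>) * ((saddle_op ?a i l - saddle_op s i l) * (?a i l - s i l))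
      + \<eta> * (Lt * (?a i l - ?b i l)\<^sup>2 + 2 * (saddle_op ?b i l - saddle_op ?e i l) * (?a i l - ?b i l)
        + Lt * (?b i l - ?e i l)\<^sup>2))"
    by (intro bsum_cong) (simp add: w_def power2_eq_square algebra_simps)
  also have "\<dots> = (-2) * E1 + (2 * \<eta>) * E2 + \<eta> * E3"
    unfolding E1_def E2_def E3_def by (simp only: bsum_add bsum_mult)
  also have "\<dots> \<ge> 0"
  proof -
    have "E1 \<le> 0" unfolding E1_def by (rule kkt_step_ineq[OF s])
    moreover have "0 \<le> (2 * \<eta>) * E2"
      unfolding E2_def using eta_pos saddle_op_monotone by simp
    moreover have "0 \<le> \<eta> * E3"
      unfolding E3_def using eta_pos saddle_op_cross_term_bound by simp
    ultimately show ?thesis by linarith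
  qed
  finally show ?thesis by simp
qed

lemma lyap_lower_bound: "(1 - \<eta> * Lt) * bdist2 (z (Suc k)) s \<le> lyap s k"
proof -
  let ?b = "z (Suc k)" and ?e = "z k"
  have "lyap s k - (1 - \<eta> * Lt) * bdist2 ?b s
     = \<eta> * bsum (\<lambda>i l. Lt * (s i l - ?b i l)\<^sup>2 + 2 * (saddle_op ?b i l - saddle_op ?e i l) * (s i l - ?b i l)
        + Lt * (?b i l - ?e i l)\<^sup>2)"
    unfolding lyap_def bdist2_def bsum_mult[symmetric] bsum_diff[symmetric]
    by (intro bsum_cong) (simp add: power2_eq_square algebra_simps)
  also have "\<dots> \<ge> 0" using saddle_op_cross_term_bound eta_pos by simp
  finally show ?thesis by simp
qed

lemma bdist2_le_lyap: "bdist2 (z (Suc k)) s \<le> lyap s k / (1 - \<eta> * Lt)"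
  using lyap_lower_bound[of k s] one_minus_eta_Lt_pos by (simp add: field_simps)

lemma lyap_nonneg: "0 \<le> lyap s k"
  using lyap_lower_bound[of k s] mult_nonneg_nonneg[OF _ bdist2_nonneg] one_minus_eta_Lt_pos
  by (meson less_imp_le order_trans)

lemma lyap_decseq:
  assumes "kkt_point s"
  shows "decseq (lyap s)"
proof (rule decseq_SucI)
  fix k
  have "0 \<le> (1 - 2 * \<eta> * Lt) * bdist2 (z (Suc (Suc k))) (z (Suc k))"
    using one_minus_2_eta_Lt_pos bdist2_nonneg by simp
  then show "lyap s (Suc k) \<le> lyap s k" using lyap_descent[OF assms, of k] by linarith
qed

lemma step_tendsto_0:
  assumes s: "kkt_point s"
  shows "(\<lambda>k. bdist2 (z (Suc (Suc k))) (z (Suc k))) \<longlonglongrightarrow> 0"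
proof -
  obtain L where "lyap s \<longlonglongrightarrow> L"
    using decseq_convergent[OF lyap_decseq[OF s], of 0] lyap_nonneg by blast
  then have "(\<lambda>k. lyap s k - lyap s (Suc k)) \<longlonglongrightarrow> L - L" by (intro tendsto_diff LIMSEQ_Suc)
  then have "(\<lambda>k. (lyap s k - lyap s (Suc k)) / (1 - 2 * \<eta> * Lt)) \<longlonglongrightarrow> 0"
    by (intro tendsto_divide_zero) simp
  moreover have "bdist2 (z (Suc (Suc k))) (z (Suc k)) \<le> (lyap s k - lyap s (Suc k)) / (1 - 2 * \<eta> * Lt)" for k
    using lyap_descent[OF s, of k] one_minus_2_eta_Lt_pos by (simp add: field_simps)
  ultimately show ?thesis by (intro tendsto_0_squeeze[OF bdist2_nonneg])
qed

subsection \<open>Convergence\<close>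

lemma tendsto_bdist2_Suc_subseq:
  assumes s: "kkt_point s" and m: "strict_mono m"
    and lim: "(\<lambda>j. bdist2 (z (Suc (m j))) U) \<longlonglongrightarrow> 0"
  shows "(\<lambda>j. bdist2 (z (Suc (Suc (m j)))) U) \<longlonglongrightarrow> 0"
proof -
  have "((\<lambda>k. bdist2 (z (Suc (Suc k))) (z (Suc k))) \<circ> m) \<longlonglongrightarrow> 0"
    by (rule LIMSEQ_subseq_LIMSEQ[OF step_tendsto_0[OF s] m])
  then have "(\<lambda>j. 2 * bdist2 (z (Suc (Suc (m j)))) (z (Suc (m j))) + 2 * bdist2 (z (Suc (m j))) U)
      \<longlonglongrightarrow> 0"
    by (intro tendsto_add_zero tendsto_mult_right_zero lim) (simp add: comp_def)
  then show ?thesis by (rule tendsto_0_squeeze[OF bdist2_nonneg bdist2_triangle])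
qed

lemma iterate_coords_bounded:
  assumes "i < Suc q" "l < dim i"
  shows "bounded (range (\<lambda>k. z (Suc k) i l))"
proof -
  obtain s where s: "kkt_point s" using kkt_point_exists by blast
  define B where "B = lyap s 0 / (1 - \<eta> * Lt)"
  have "\<bar>z (Suc k) i l\<bar> \<le> \<bar>s i l\<bar> + sqrt B" for k
  proof -
    have "lyap s k \<le> lyap s 0" by (rule decseqD[OF lyap_decseq[OF s]]) simp
    then have "lyap s k / (1 - \<eta> * Lt) \<le> B"
      unfolding B_def using one_minus_eta_Lt_pos by (simp add: divide_right_mono)
    then have "bdist2 (z (Suc k)) s \<le> B" using bdist2_le_lyap[of k s] by linarith
    then have "(z (Suc k) i l - s i l)\<^sup>2 \<le> B"
      using power2_le_bsum[OF assms, of "\<lambda>i l. z (Suc k) i l - s i l"] unfolding bdist2_def by simp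
    then have "\<bar>z (Suc k) i l - s i l\<bar> \<le> sqrt B" by (intro real_le_rsqrt) simp
    then show ?thesis by simp
  qed
  then show ?thesis unfolding bounded_real by blast
qed

lemma cluster_point_exists:
  "\<exists>K U. strict_mono K \<and> (\<forall>i<q. U i \<in> Vsp (n i)) \<and>
     (\<lambda>j. bdist2 (z (K j)) U) \<longlonglongrightarrow> 0 \<and> (\<lambda>j. bdist2 (z (Suc (K j))) U) \<longlonglongrightarrow> 0 \<and>
     (\<lambda>j. bdist2 (z (Suc (Suc (K j)))) U) \<longlonglongrightarrow> 0"
proof -
  obtain s where s: "kkt_point s" using kkt_point_exists by blast
  define I where "I = Sigma {..<Suc q} (\<lambda>i. {..<dim i})"
  have "finite I" unfolding I_def by auto
  moreover have "\<forall>j\<in>I. bounded (range (\<lambda>k. z (Suc k) (fst j) (snd j)))"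
    unfolding I_def using iterate_coords_bounded by auto
  ultimately obtain r L where r: "strict_mono r"
    and L: "\<forall>j\<in>I. (\<lambda>k. z (Suc (r k)) (fst j) (snd j)) \<longlonglongrightarrow> L j"
    using finite_coords_convergent_subseq[of I "\<lambda>k j. z (Suc k) (fst j) (snd j)"] by blast
  define U where "U i l = (if i < Suc q \<and> l < dim i then L (i, l) else 0)" for i l
  have U_Vsp: "\<forall>i<q. U i \<in> Vsp (n i)" unfolding U_def Vsp_def dim_def by auto
  have lim1: "(\<lambda>j. bdist2 (z (Suc (r j))) U) \<longlonglongrightarrow> 0"
    by (rule tendsto_bdist2_0I) (use L in \<open>auto simp: U_def I_def\<close>)
  define K where "K j = Suc (r j)" for j
  have K: "strict_mono K" using r unfolding K_def strict_mono_def by auto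
  have lim2: "(\<lambda>j. bdist2 (z (Suc (K j))) U) \<longlonglongrightarrow> 0"
    unfolding K_def by (rule tendsto_bdist2_Suc_subseq[OF s r lim1])
  have "(\<lambda>j. bdist2 (z (Suc (Suc (K j)))) U) \<longlonglongrightarrow> 0"
    by (rule tendsto_bdist2_Suc_subseq[OF s K lim2])
  then show ?thesis using K U_Vsp lim1 lim2 by (intro exI[of _ K] exI[of _ U]) (simp add: K_def)
qed

context
  fixes K :: "nat \<Rightarrow> nat" and U :: "nat \<Rightarrow> nat \<Rightarrow> real"
  assumes lim0: "(\<lambda>j. bdist2 (z (K j)) U) \<longlonglongrightarrow> 0"
    and lim1: "(\<lambda>j. bdist2 (z (Suc (K j))) U) \<longlonglongrightarrow> 0"
    and lim2: "(\<lambda>j. bdist2 (z (Suc (Suc (K j)))) U) \<longlonglongrightarrow> 0"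
begin

lemma cluster_coords:
  assumes "i < Suc q" "l < dim i"
  shows "(\<lambda>j. z (K j) i l) \<longlonglongrightarrow> U i l" "(\<lambda>j. z (Suc (K j)) i l) \<longlonglongrightarrow> U i l"
    "(\<lambda>j. z (Suc (Suc (K j))) i l) \<longlonglongrightarrow> U i l"
    "(\<lambda>j. saddle_op (z (K j)) i l) \<longlonglongrightarrow> saddle_op U i l"
    "(\<lambda>j. saddle_op (z (Suc (K j))) i l) \<longlonglongrightarrow> saddle_op U i l"
  using tendsto_bdist2_0D[OF lim0 assms] tendsto_bdist2_0D[OF lim1 assms]
    tendsto_bdist2_0D[OF lim2 assms] tendsto_bdist2_0D[OF saddle_op_tendsto[OF lim0] assms]
    tendsto_bdist2_0D[OF saddle_op_tendsto[OF lim1] assms]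
  by auto

lemma cluster_saddle_op_last:
  assumes r: "r < p"
  shows "saddle_op U q r = 0"
proof -
  have il: "q < Suc q" "r < dim q" using r by (auto simp: dim_def)
  have step: "z (Suc (Suc (K j))) q r
      = z (Suc (K j)) q r - \<eta> * (2 * saddle_op (z (Suc (K j))) q r - saddle_op (z (K j)) q r)" for j
    using fun_cong[OF z_Suc_Suc_last[of "K j"], of r] unfolding w_def .
  have "(\<lambda>j. z (Suc (Suc (K j))) q r) \<longlonglongrightarrow> U q r - \<eta> * (2 * saddle_op U q r - saddle_op U q r)"
    unfolding step by (intro tendsto_intros cluster_coords[OF il])
  from LIMSEQ_unique[OF cluster_coords(3)[OF il] this] show ?thesis using eta_pos by simp
qed

lemma cluster_inner_tendsto:
  assumes i: "i < q"
  shows "(\<lambda>j. inner_n (n i) (\<lambda>l. w (K j) i l - z (Suc (Suc (K j))) i l) (\<lambda>l. u l - z (Suc (Suc (K j))) i l))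
      \<longlonglongrightarrow> - \<eta> * inner_n (n i) (saddle_op U i) (\<lambda>l. u l - U i l)"
proof -
  have "(\<lambda>j. inner_n (n i) (\<lambda>l. w (K j) i l - z (Suc (Suc (K j))) i l) (\<lambda>l. u l - z (Suc (Suc (K j))) i l))
      \<longlonglongrightarrow> (\<Sum>l<n i. (U i l - \<eta> * (2 * saddle_op U i l - saddle_op U i l) - U i l) * (u l - U i l))"
    unfolding inner_n_def w_def
    by (intro tendsto_sum tendsto_intros cluster_coords) (use i in \<open>auto simp: dim_def\<close>)
  also have "(\<Sum>l<n i. (U i l - \<eta> * (2 * saddle_op U i l - saddle_op U i l) - U i l) * (u l - U i l))
      = - \<eta> * inner_n (n i) (saddle_op U i) (\<lambda>l. u l - U i l)"
    unfolding inner_n_def by (simp add: sum_distrib_left algebra_simps)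
  finally show ?thesis .
qed

text \<open>The proximal inequalities along the subsequence pass to the limit by closedness of \<open>f\<^sub>i\<close>.\<close>

lemma cluster_block_ineq:
  assumes i: "i < q" and U_i: "U i \<in> Vsp (n i)" and u: "u \<in> Vsp (n i)" "f i u \<noteq> \<infinity>"
  shows "f i (U i) \<le> ereal (real_of_ereal (f i u) + inner_n (n i) (saddle_op U i) (\<lambda>l. u l - U i l))"
proof -
  define a where "a j = z (Suc (Suc (K j))) i" for j
  define r where "r j = real_of_ereal (f i u)
      - inner_n (n i) (\<lambda>l. w (K j) i l - a j l) (\<lambda>l. u l - a j l) / \<eta>" for j
  have a_Vsp: "a j \<in> Vsp (n i)" for j using prox_step_ineq[OF i] unfolding a_def by auto
  have "f i (a j) \<le> ereal (r j)" for j
  proof -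
    have a: "a j \<in> Vsp (n i)" "f i (a j) \<noteq> \<infinity>"
      and "\<eta> * real_of_ereal (f i (a j)) + inner_n (n i) (\<lambda>l. w (K j) i l - a j l) (\<lambda>l. u l - a j l)
        \<le> \<eta> * real_of_ereal (f i u)"
      using prox_step_ineq[OF i, of "K j"] u unfolding a_def by auto
    then have "ereal (real_of_ereal (f i (a j))) \<le> ereal (r j)"
      unfolding r_def using eta_pos by (simp add: field_simps)
    then show ?thesis unfolding f_ereal[OF i a] .
  qed
  moreover have "r \<longlonglongrightarrow> real_of_ereal (f i u) + inner_n (n i) (saddle_op U i) (\<lambda>l. u l - U i l)"
  proof -
    have "r \<longlonglongrightarrow> real_of_ereal (f i u) - (- \<eta> * inner_n (n i) (saddle_op U i) (\<lambda>l. u l - U i l)) / \<eta>"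
      unfolding r_def a_def by (intro tendsto_intros cluster_inner_tendsto[OF i]) (use eta_pos in simp)
    then show ?thesis using eta_pos by simp
  qed
  moreover have "(\<lambda>j. norm2 (n i) (\<lambda>l. a j l - U i l)) \<longlonglongrightarrow> 0"
  proof (rule tendsto_0_squeeze)
    show "norm2 (n i) (\<lambda>l. a j l - U i l) \<le> sqrt (bdist2 (z (Suc (Suc (K j)))) U)" for j
      unfolding a_def by (rule norm2_block_le_bdist2[OF i])
    show "(\<lambda>j. sqrt (bdist2 (z (Suc (Suc (K j)))) U)) \<longlonglongrightarrow> 0"
      using tendsto_real_sqrt[OF lim2] by simp
  qed (rule norm2_nonneg)
  ultimately show ?thesis
    using f_prop[OF i] U_i a_Vsp unfolding closed_fn_def by blast
qed

lemma cluster_point_kkt: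
  assumes U_Vsp: "\<forall>i<q. U i \<in> Vsp (n i)"
  shows "kkt_point U"
proof -
  have "f i (U i) \<noteq> \<infinity> \<and> (\<forall>u\<in>Vsp (n i). f i u \<noteq> \<infinity> \<longrightarrow>
      real_of_ereal (f i (U i)) \<le> real_of_ereal (f i u) + inner_n (n i) (saddle_op U i) (\<lambda>l. u l - U i l))"
    if i: "i < q" for i
  proof -
    have U_i: "U i \<in> Vsp (n i)" using U_Vsp i by blast
    obtain u0 where "u0 \<in> Vsp (n i)" "f i u0 \<noteq> \<infinity>" using f_prop[OF i] unfolding proper_fn_def by auto
    then have fin: "f i (U i) \<noteq> \<infinity>" using cluster_block_ineq[OF i U_i] by force
    have e: "f i (U i) = ereal (real_of_ereal (f i (U i)))" using f_ereal[OF i U_i fin] by simp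
    show ?thesis using fin cluster_block_ineq[OF i U_i] by (subst (asm) e) auto
  qed
  then show ?thesis unfolding kkt_point_def using U_Vsp cluster_saddle_op_last by blast
qed

end

lemma iterates_converge: "\<exists>U. kkt_point U \<and> (\<lambda>k. bdist2 (z (Suc k)) U) \<longlonglongrightarrow> 0"
proof -
  obtain K U where K: "strict_mono K" and U_Vsp: "\<forall>i<q. U i \<in> Vsp (n i)"
    and lim0: "(\<lambda>j. bdist2 (z (K j)) U) \<longlonglongrightarrow> 0"
    and lim1: "(\<lambda>j. bdist2 (z (Suc (K j))) U) \<longlonglongrightarrow> 0"
    and lim2: "(\<lambda>j. bdist2 (z (Suc (Suc (K j)))) U) \<longlonglongrightarrow> 0"
    using cluster_point_exists by blast
  have U: "kkt_point U" by (rule cluster_point_kkt[OF lim0 lim1 lim2 U_Vsp])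
  obtain L where L: "lyap U \<longlonglongrightarrow> L"
    using decseq_convergent[OF lyap_decseq[OF U], of 0] lyap_nonneg by blast
  have "(\<lambda>j. lyap U (K j)) \<longlonglongrightarrow> (\<Sum>i<Suc q. \<Sum>l<dim i. (U i l - U i l)\<^sup>2
      - 2 * \<eta> * (saddle_op U i l - saddle_op U i l) * (U i l - U i l) + \<eta> * Lt * (U i l - U i l)\<^sup>2)"
    unfolding lyap_def bsum_def
    by (intro tendsto_sum tendsto_intros cluster_coords[OF lim0 lim1 lim2]) auto
  then have "(lyap U \<circ> K) \<longlonglongrightarrow> 0" by (simp add: comp_def)
  with LIMSEQ_subseq_LIMSEQ[OF L K] have "L = 0" using LIMSEQ_unique by blast
  with L have "(\<lambda>k. lyap U k / (1 - \<eta> * Lt)) \<longlonglongrightarrow> 0" by (simp add: tendsto_divide_zero)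
  then have "(\<lambda>k. bdist2 (z (Suc k)) U) \<longlonglongrightarrow> 0"
    by (rule tendsto_0_squeeze[OF bdist2_nonneg bdist2_le_lyap])
  with U show ?thesis by blast
qed

end

theorem theorem2:
  fixes q p :: nat and n :: "nat \<Rightarrow> nat"
    and f :: "nat \<Rightarrow> (nat \<Rightarrow> real) \<Rightarrow> ereal"
    and A :: "nat \<Rightarrow> nat \<Rightarrow> nat \<Rightarrow> real"
    and c :: "nat \<Rightarrow> real"
    and \<rho> Lt \<eta> :: real
    and x :: "nat \<Rightarrow> int \<Rightarrow> nat \<Rightarrow> real"
    and y :: "int \<Rightarrow> nat \<Rightarrow> real"
  assumes f_prop: "\<And>i. i < q \<Longrightarrow> proper_fn (n i) (f i) \<and> closed_fn (n i) (f i) \<and> convex_fn (n i) (f i)"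
    and c_in: "c \<in> Vsp p"
    and saddle: "has_saddle_point q n p f A c"
    and rho: "0 \<le> \<rho>"
    and Lt: "0 < Lt" "spec_norm (off n q + p) (Mtilde q n p A \<rho>) \<le> Lt"
    and eta: "0 < \<eta>" "\<eta> < 1 / (2 * Lt)"
    and init_x: "\<And>i. i < q \<Longrightarrow> x i (-1) \<in> Vsp (n i) \<and> x i 0 \<in> Vsp (n i)"
    and init_y: "y (-1) \<in> Vsp p" "y 0 \<in> Vsp p"
    and x_step: "\<And>i k. i < q \<Longrightarrow>
       (let xhat = (\<lambda>l. x i (int k) l
              - 2 * \<eta> * ATv (A i) p (n i) (y (int k)) l
              - 2 * \<eta> * \<rho> * (\<Sum>j<q. ATv (A i) p (n i) (Av (A j) p (n j) (x j (int k))) l)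
              + \<eta> * ATv (A i) p (n i) (y (int k - 1)) l
              + \<eta> * \<rho> * (\<Sum>j<q. ATv (A i) p (n i) (Av (A j) p (n j) (x j (int k - 1))) l)
              + \<eta> * \<rho> * ATv (A i) p (n i) c l)
        in x i (int k + 1) \<in> Vsp (n i) \<and>
           (\<forall>u\<in>Vsp (n i).
              ereal \<eta> * f i (x i (int k + 1)) + ereal ((norm2 (n i) (\<lambda>l. x i (int k + 1) l - xhat l))\<^sup>2 / 2)
              \<le> ereal \<eta> * f i u + ereal ((norm2 (n i) (\<lambda>l. u l - xhat l))\<^sup>2 / 2)))"
    and y_step: "\<And>k. y (int k + 1) = (\<lambda>r. y (int k) r
              + 2 * \<eta> * sumAx q n p A (\<lambda>i. x i (int k)) r
              - \<eta> * sumAx q n p A (\<lambda>i. x i (int k - 1)) r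
              - \<eta> * c r)"
  shows "\<exists>xs. (\<forall>i<q. xs i \<in> Vsp (n i) \<and> (\<lambda>k. norm2 (n i) (\<lambda>l. x i (int k) l - xs i l)) \<longlonglongrightarrow> 0)
             \<and> is_solution q n p f A c xs"
proof -
  interpret forward_reflected_backward q p n f A c \<rho> Lt \<eta> x y
  proof unfold_locales
    show "\<And>i. i < q \<Longrightarrow> proper_fn (n i) (f i) \<and> closed_fn (n i) (f i) \<and> convex_fn (n i) (f i)"
      by (rule f_prop)
  qed (use c_in saddle rho Lt eta x_step y_step in \<open>blast+\<close>)
  obtain U where U: "kkt_point U" and lim: "(\<lambda>k. bdist2 (z (Suc k)) U) \<longlonglongrightarrow> 0"
    using iterates_converge by blast
  have "(\<lambda>k. norm2 (n i) (\<lambda>l. x i (int k) l - U i l)) \<longlonglongrightarrow> 0" if i: "i < q" for i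
  proof (rule tendsto_0_squeeze)
    show "norm2 (n i) (\<lambda>l. x i (int k) l - U i l) \<le> sqrt (bdist2 (z (Suc k)) U)" for k
      using norm2_block_le_bdist2[OF i, of "z (Suc k)" U] i by (simp add: z_block)
    show "(\<lambda>k. sqrt (bdist2 (z (Suc k)) U)) \<longlonglongrightarrow> 0"
      using tendsto_real_sqrt[OF lim] by simp
  qed (rule norm2_nonneg)
  then show ?thesis using U kkt_point_is_solution[OF U] unfolding kkt_point_def by blast
qed

end
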